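(* Let $n=a^2b$ with $a,b$ positive integers, $b>1$ square-free. Let $g\in C(-4n)$ be a class derived from the identity class $e_{-4b}=[(1,0,b)]\in C(-4b)$. Let $r$ be an odd positive integer with $\gcd(r,a)=1$, and let $h\in C(-4nr^2)$ be any class derived from $g$. Then the class $l=h^{\varphi_{-4n}(r)}$ is derived from the identity class $[(1,0,b)]\in C(-4b)$ and also from the identity class $[(1,0,br^2)]\in C(-4br^2)$.
   Context: A binary quadratic form $(a,b,c)$ means $ax^2+bxy+cy^2$ with integer coefficients and discriminant $b^2-4ac$; primitive means $\gcd(a,b,c)=1$. Equivalence of forms is via substitutions in $SL_2(\mathbb Z)$. For $\Delta<0$, $C(\Delta)$ is the class group of equivalence classes of primitive positive definite forms of discriminant $\Delta$ under composition; its identity for $\Delta=-4m$ is the class of $(1,0,m)$. For a positive integer $s$, a class $f\in C(\Delta s^2)$ is derived from a class $g\in C(\Delta)$ if there exist a representative $g_0$ of $g$ and an integer matrix $\begin{pmatrix}\alpha&\beta\\ \gamma&\delta\end{pmatrix}$ of determinant $s$ such that the form $g_0(\alpha x+\beta y,\gamma x+\delta y)$ lies in the class $f$. For an odd positive integer $r=\prod_i p_i^{e_i}$ and discriminant $\Delta$, $\varphi_\Delta(r)=\prod_i p_i^{e_i-1}\bigl(p_i-\left(\frac{\Delta}{p_i}\right)\bigr)$, where $\left(\frac{\Delta}{p}\right)$ is the Kronecker symbol. *)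

theory Defs
  imports "HOL-Number_Theory.Number_Theory" "HOL-Computational_Algebra.Squarefree"
begin

type_synonym qform = "int \<times> int \<times> int"

definition disc :: "qform \<Rightarrow> int" where
  "disc f = (case f of (a, b, c) \<Rightarrow> b^2 - 4*a*c)"

definition primitive :: "qform \<Rightarrow> bool" where
  "primitive f = (case f of (a, b, c) \<Rightarrow> gcd a (gcd b c) = 1)"

definition pos_def :: "qform \<Rightarrow> bool" where
  "pos_def f = (case f of (a, b, c) \<Rightarrow> a > 0 \<and> b^2 - 4*a*c < 0)"

text \<open>The form f(alpha x + beta y, gamma x + delta y).\<close>
definition subst :: "qform \<Rightarrow> int \<Rightarrow> int \<Rightarrow> int \<Rightarrow> int \<Rightarrow> qform" where
  "subst f \<alpha> \<beta> \<gamma> \<delta> = (case f of (a, b, c) \<Rightarrow>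
     (a*\<alpha>^2 + b*\<alpha>*\<gamma> + c*\<gamma>^2,
      2*a*\<alpha>*\<beta> + b*(\<alpha>*\<delta> + \<beta>*\<gamma>) + 2*c*\<gamma>*\<delta>,
      a*\<beta>^2 + b*\<beta>*\<delta> + c*\<delta>^2))"

definition qclass :: "qform \<Rightarrow> qform set" where
  "qclass f = {g. \<exists>\<alpha> \<beta> \<gamma> \<delta>. \<alpha>*\<delta> - \<beta>*\<gamma> = 1 \<and> g = subst f \<alpha> \<beta> \<gamma> \<delta>}"

definition classgroup :: "int \<Rightarrow> qform set set" where
  "classgroup D = {qclass f | f. primitive f \<and> pos_def f \<and> disc f = D}"

definition principal_form :: "int \<Rightarrow> qform" where
  "principal_form D = (if even D then (1, 0, - D div 4) else (1, 1, (1 - D) div 4))"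

definition one_class :: "int \<Rightarrow> qform set" where
  "one_class D = qclass (principal_form D)"

definition dirichlet_comp :: "qform \<Rightarrow> qform \<Rightarrow> qform \<Rightarrow> bool" where
  "dirichlet_comp f g F = (case f of (a1, b1, c1) \<Rightarrow> case g of (a2, b2, c2) \<Rightarrow>
     case F of (A, B, C) \<Rightarrow>
       disc f = disc g \<and> a1 > 0 \<and> a2 > 0 \<and>
       gcd a1 (gcd a2 ((b1 + b2) div 2)) = 1 \<and>
       A = a1 * a2 \<and> [B = b1] (mod 2*a1) \<and> [B = b2] (mod 2*a2) \<and>
       B^2 - 4*A*C = disc f)"

text \<open>Composition of classes (well defined by the classical theory).\<close>
definition cmul :: "qform set \<Rightarrow> qform set \<Rightarrow> qform set" where
  "cmul X Y = (SOME Z. \<exists>f\<in>X. \<exists>g\<in>Y. \<exists>F. dirichlet_comp f g F \<and> Z = qclass F)"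

fun cpow :: "int \<Rightarrow> qform set \<Rightarrow> nat \<Rightarrow> qform set" where
  "cpow D X 0 = one_class D"
| "cpow D X (Suc k) = cmul X (cpow D X k)"

definition derived_from :: "qform set \<Rightarrow> qform set \<Rightarrow> int \<Rightarrow> bool" where
  "derived_from f g s = (\<exists>g0\<in>g. \<exists>\<alpha> \<beta> \<gamma> \<delta>. \<alpha>*\<delta> - \<beta>*\<gamma> = s \<and> subst g0 \<alpha> \<beta> \<gamma> \<delta> \<in> f)"

text \<open>phi_D(r) for odd positive r; for odd primes the Kronecker symbol is the Legendre symbol.\<close>
definition phiD :: "int \<Rightarrow> int \<Rightarrow> int" where
  "phiD D r = (\<Prod>p\<in>prime_factors r. p ^ (multiplicity p r - 1) * (p - Legendre D p))"

end

theory Submission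
  imports Defs
begin

(* A form (A, B, C) of discriminant -4n corresponds to the lattice [A, B/2 + \<surd>-n] in \<complex>; under this
   correspondence proper equivalence is homothety and Dirichlet composition is multiplication of
   lattices, so powers of a class can be computed inside \<int>[\<surd>-b].

   The class h is derived from (1, 0, b) by a matrix T of determinant s = ar, and may be represented
   by a form f = (1, 0, b) \<circ> T whose first coefficient A = N(\<mu>), \<mu> = t11 + t21 \<surd>-b, is prime to
   the discriminant. Composing f with itself, the lattice of h^N lies in cnj(\<mu>)^N \<int>[\<surd>-b]; reading
   off its basis shows that h^N is (1, 0, b) transformed by (z, p; y, q) with \<mu>^N = z + y \<surd>-b and
   determinant s.

   For N = \<phi>_D(r) a Frobenius argument in \<int>[\<surd>-b] modulo each prime power Q^k exactly dividing r
   gives \<mu>^N \<in> \<int> + Q^k \<int>\<surd>-b, hence r | y. Since N(\<mu>^N) is prime to r, also r | q, and the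
   transformation factors through (1, 0, b r^2) with determinant a. *)

section \<open>Forms, proper equivalence and derived classes\<close>

lemma subst_subst:
  "subst (subst f a1 b1 c1 d1) a2 b2 c2 d2 =
   subst f (a1*a2 + b1*c2) (a1*b2 + b1*d2) (c1*a2 + d1*c2) (c1*b2 + d1*d2)"
  by (cases f) (simp add: subst_def algebra_simps power2_eq_square)

lemma subst_identity [simp]: "subst f 1 0 0 1 = f"
  by (cases f) (simp add: subst_def)

lemma subst_subst_det:
  "\<exists>\<alpha> \<beta> \<gamma> \<delta>. subst (subst f a1 b1 c1 d1) a2 b2 c2 d2 = subst f \<alpha> \<beta> \<gamma> \<delta> \<and>
     \<alpha>*\<delta> - \<beta>*\<gamma> = (a1*d1 - b1*c1) * (a2*d2 - b2*c2)"
  by (intro exI[of _ "a1*a2 + b1*c2"] exI[of _ "a1*b2 + b1*d2"]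
        exI[of _ "c1*a2 + d1*c2"] exI[of _ "c1*b2 + d1*d2"])
     (simp add: subst_subst algebra_simps)

lemma disc_subst: "disc (subst f \<alpha> \<beta> \<gamma> \<delta>) = (\<alpha>*\<delta> - \<beta>*\<gamma>)^2 * disc f"
  by (cases f) (simp add: disc_def subst_def power2_eq_square algebra_simps)

lemma subst_unit_form:
  "subst (1, 0, b) \<alpha> \<beta> \<gamma> \<delta> = (\<alpha>^2 + b*\<gamma>^2, 2*\<alpha>*\<beta> + 2*b*\<gamma>*\<delta>, \<beta>^2 + b*\<delta>^2)"
  by (simp add: subst_def)

lemma subst_in_qclass: "\<alpha>*\<delta> - \<beta>*\<gamma> = 1 \<Longrightarrow> subst f \<alpha> \<beta> \<gamma> \<delta> \<in> qclass f"
  unfolding qclass_def by blast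

lemma qclass_refl: "f \<in> qclass f"
  using subst_in_qclass[of 1 1 0 0 f] by simp

lemma subst_qclass_member:
  assumes "g \<in> qclass f"
  shows "\<exists>\<alpha>' \<beta>' \<gamma>' \<delta>'. subst g \<alpha> \<beta> \<gamma> \<delta> = subst f \<alpha>' \<beta>' \<gamma>' \<delta>' \<and> \<alpha>'*\<delta>' - \<beta>'*\<gamma>' = \<alpha>*\<delta> - \<beta>*\<gamma>"
proof -
  obtain \<alpha>1 \<beta>1 \<gamma>1 \<delta>1 where "\<alpha>1*\<delta>1 - \<beta>1*\<gamma>1 = 1" "g = subst f \<alpha>1 \<beta>1 \<gamma>1 \<delta>1"
    using assms unfolding qclass_def by blast
  then show ?thesis using subst_subst_det[of f \<alpha>1 \<beta>1 \<gamma>1 \<delta>1 \<alpha> \<beta> \<gamma> \<delta>] by auto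
qed

lemma qclass_trans:
  assumes "g \<in> qclass f" and "k \<in> qclass g" shows "k \<in> qclass f"
proof -
  obtain \<alpha> \<beta> \<gamma> \<delta> where "\<alpha>*\<delta> - \<beta>*\<gamma> = 1" "k = subst g \<alpha> \<beta> \<gamma> \<delta>"
    using assms(2) unfolding qclass_def by blast
  then show ?thesis using subst_qclass_member[OF assms(1), of \<alpha> \<beta> \<gamma> \<delta>] subst_in_qclass by metis
qed

lemma qclass_sym:
  assumes "g \<in> qclass f" shows "f \<in> qclass g"
proof -
  obtain \<alpha> \<beta> \<gamma> \<delta> where det: "\<alpha>*\<delta> - \<beta>*\<gamma> = 1" and g: "g = subst f \<alpha> \<beta> \<gamma> \<delta>"
    using assms unfolding qclass_def by blast
  have "subst g \<delta> (-\<beta>) (-\<gamma>) \<alpha> = f"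
    using det by (simp add: g subst_subst algebra_simps)
  moreover have "\<delta>*\<alpha> - (-\<beta>)*(-\<gamma>) = 1" using det by (simp add: algebra_simps)
  ultimately show ?thesis by (metis subst_in_qclass)
qed

lemma qclass_eq: "g \<in> qclass f \<Longrightarrow> qclass g = qclass f"
  using qclass_trans qclass_sym by blast

lemma derived_from_qclass_member:
  assumes "derived_from h (qclass f0) s" and "h = qclass h1" and "f \<in> h"
  shows "\<exists>\<alpha> \<beta> \<gamma> \<delta>. \<alpha>*\<delta> - \<beta>*\<gamma> = s \<and> f = subst f0 \<alpha> \<beta> \<gamma> \<delta>"
proof -
  obtain g0 \<alpha> \<beta> \<gamma> \<delta> where g0: "g0 \<in> qclass f0" and det: "\<alpha>*\<delta> - \<beta>*\<gamma> = s"
    and mem: "subst g0 \<alpha> \<beta> \<gamma> \<delta> \<in> h"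
    using assms(1) unfolding derived_from_def by blast
  obtain \<alpha>' \<beta>' \<gamma>' \<delta>' where det': "\<alpha>'*\<delta>' - \<beta>'*\<gamma>' = s"
    and eq: "subst g0 \<alpha> \<beta> \<gamma> \<delta> = subst f0 \<alpha>' \<beta>' \<gamma>' \<delta>'"
    using subst_qclass_member[OF g0, of \<alpha> \<beta> \<gamma> \<delta>] det by auto
  have "f \<in> qclass (subst f0 \<alpha>' \<beta>' \<gamma>' \<delta>')"
    using assms(2,3) mem eq qclass_eq by metis
  then obtain u1 u2 u3 u4 where "u1*u4 - u2*u3 = 1" "f = subst (subst f0 \<alpha>' \<beta>' \<gamma>' \<delta>') u1 u2 u3 u4"
    unfolding qclass_def by blast
  then show ?thesis using subst_subst_det[of f0 \<alpha>' \<beta>' \<gamma>' \<delta>' u1 u2 u3 u4] det' by auto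
qed

lemma derived_from_trans:
  assumes h: "derived_from h g r" and g: "derived_from g (qclass f0) a" and "g = qclass g1"
  shows "derived_from h (qclass f0) (a * r)"
proof -
  obtain g0 \<alpha> \<beta> \<gamma> \<delta> where "g0 \<in> g" and det: "\<alpha>*\<delta> - \<beta>*\<gamma> = r"
    and mem: "subst g0 \<alpha> \<beta> \<gamma> \<delta> \<in> h"
    using h unfolding derived_from_def by blast
  then obtain \<alpha>' \<beta>' \<gamma>' \<delta>' where det': "\<alpha>'*\<delta>' - \<beta>'*\<gamma>' = a" and "g0 = subst f0 \<alpha>' \<beta>' \<gamma>' \<delta>'"
    using derived_from_qclass_member[OF g \<open>g = qclass g1\<close>] by blast
  then obtain \<alpha>'' \<beta>'' \<gamma>'' \<delta>'' where "\<alpha>''*\<delta>'' - \<beta>''*\<gamma>'' = a * r"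
    and "subst g0 \<alpha> \<beta> \<gamma> \<delta> = subst f0 \<alpha>'' \<beta>'' \<gamma>'' \<delta>''"
    using subst_subst_det[of f0 \<alpha>' \<beta>' \<gamma>' \<delta>' \<alpha> \<beta> \<gamma> \<delta>] det by auto
  then show ?thesis using mem qclass_refl unfolding derived_from_def by metis
qed

lemma derived_from_qclass_subst:
  "\<alpha>*\<delta> - \<beta>*\<gamma> = s \<Longrightarrow> derived_from (qclass (subst f \<alpha> \<beta> \<gamma> \<delta>)) (qclass f) s"
  unfolding derived_from_def using qclass_refl by blast

lemma coprime_by_primes:
  assumes "\<And>p. prime p \<Longrightarrow> p dvd x \<Longrightarrow> p dvd y \<Longrightarrow> False"
  shows "coprime x (y::int)"
proof (rule ccontr)
  assume "\<not> coprime x y"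
  then have "\<bar>gcd x y\<bar> \<noteq> 1" by (simp add: coprime_iff_gcd_eq_1)
  then obtain p where "prime p" "p dvd gcd x y" using prime_factor_int by blast
  then show False using assms by auto
qed

lemma prime_dvd_prod_primes_iff:
  fixes T :: "int set"
  assumes "finite T" and "\<And>p. p \<in> T \<Longrightarrow> prime p" and "prime q"
  shows "q dvd \<Prod>T \<longleftrightarrow> q \<in> T"
  using assms prime_dvd_prod_iff[OF assms(1,3), of id] primes_dvd_imp_eq by auto

lemma prime_not_dvd_form_value:
  fixes a b c x y p :: int
  assumes p: "prime p" and prim: "gcd a (gcd b c) = 1"
    and dx: "p dvd x \<longleftrightarrow> p dvd a \<and> \<not> p dvd c" and dy: "p dvd y \<longleftrightarrow> \<not> p dvd a"
  shows "\<not> p dvd a*x^2 + b*x*y + c*y^2"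
proof
  assume pf: "p dvd a*x^2 + b*x*y + c*y^2"
  consider "\<not> p dvd a" | "p dvd a" "\<not> p dvd c" | "p dvd a" "p dvd c" by blast
  then show False
  proof cases
    case 1
    have "a*x^2 = (a*x^2 + b*x*y + c*y^2) - y*(b*x + c*y)"
      by (simp add: algebra_simps power2_eq_square)
    then have "p dvd a*x^2" using pf 1 dy by (metis dvd_diff dvd_mult2)
    then show False using 1 dx p by (simp add: prime_dvd_mult_iff prime_dvd_power_iff)
  next
    case 2
    have "c*y^2 = (a*x^2 + b*x*y + c*y^2) - x*(a*x + b*y)"
      by (simp add: algebra_simps power2_eq_square)
    then have "p dvd c*y^2" using pf 2 dx by (metis dvd_diff dvd_mult2)
    then show False using 2 dy p by (simp add: prime_dvd_mult_iff prime_dvd_power_iff)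
  next
    case 3
    have "\<not> p dvd b" using 3 prim p gcd_greatest not_prime_unit by metis
    moreover have "b*x*y = (a*x^2 + b*x*y + c*y^2) - (a*x^2 + c*y^2)" by simp
    then have "p dvd b*x*y" using pf 3 by (metis dvd_diff dvd_add dvd_mult2 dvd_mult)
    ultimately show False using 3 dx dy p by (simp add: prime_dvd_mult_iff)
  qed
qed

text \<open>The classical choice: x is the product of the primes of M dividing a but not c, and
  y the product of the primes of M not dividing a.\<close>
lemma primitive_form_represents_coprime:
  fixes a b c M :: int
  assumes prim: "gcd a (gcd b c) = 1" and M: "M \<noteq> 0"
  shows "\<exists>x y. coprime x y \<and> coprime (a*x^2 + b*x*y + c*y^2) M"
proof -
  define P where "P = {p::int. prime p \<and> p dvd M}"
  have "finite P"
    by (rule finite_subset[of _ "{d. d dvd M}"]) (auto simp: P_def M)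
  define T1 where "T1 = {p\<in>P. \<not> p dvd a}"
  define T2 where "T2 = {p\<in>P. p dvd a \<and> \<not> p dvd c}"
  have "finite T1" "finite T2" using \<open>finite P\<close> by (simp_all add: T1_def T2_def)
  have primes: "\<And>p. p \<in> T1 \<Longrightarrow> prime p" "\<And>p. p \<in> T2 \<Longrightarrow> prime p"
    by (auto simp: T1_def T2_def P_def)
  have dx: "q dvd \<Prod>T2 \<longleftrightarrow> q \<in> T2" and dy: "q dvd \<Prod>T1 \<longleftrightarrow> q \<in> T1" if "prime q" for q
    using prime_dvd_prod_primes_iff \<open>finite T1\<close> \<open>finite T2\<close> primes that by blast+
  have "coprime (\<Prod>T2) (\<Prod>T1)"
  proof (rule coprime_by_primes)
    fix p assume "prime p" "p dvd \<Prod>T2" "p dvd \<Prod>T1"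
    then have "p \<in> T1" "p \<in> T2" using dx dy by blast+
    then show False by (simp add: T1_def T2_def)
  qed
  moreover have "coprime (a*(\<Prod>T2)^2 + b*(\<Prod>T2)*(\<Prod>T1) + c*(\<Prod>T1)^2) M"
  proof (rule coprime_by_primes)
    fix p assume p: "prime p" and "p dvd M"
    then have "p dvd \<Prod>T2 \<longleftrightarrow> p dvd a \<and> \<not> p dvd c" "p dvd \<Prod>T1 \<longleftrightarrow> \<not> p dvd a"
      using dx dy by (auto simp: T1_def T2_def P_def)
    then show "p dvd a*(\<Prod>T2)^2 + b*(\<Prod>T2)*(\<Prod>T1) + c*(\<Prod>T1)^2 \<Longrightarrow> False"
      using prime_not_dvd_form_value[OF p prim] by blast
  qed
  ultimately show ?thesis by blast
qed

lemma qclass_member_first_coeff_coprime: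
  assumes "primitive f" and "M \<noteq> 0"
  shows "\<exists>f'\<in>qclass f. coprime (fst f') M"
proof -
  obtain a b c where f: "f = (a, b, c)" by (cases f)
  obtain x y where xy: "coprime x y" and cop: "coprime (a*x^2 + b*x*y + c*y^2) M"
    using primitive_form_represents_coprime[of a b c M] assms by (auto simp: f primitive_def)
  obtain u v where "u*x + v*y = 1"
    using bezout_int[of x y] xy by (auto simp: coprime_iff_gcd_eq_1)
  then have "subst f x (-v) y u \<in> qclass f"
    by (intro subst_in_qclass) (simp add: algebra_simps)
  moreover have "fst (subst f x (-v) y u) = a*x^2 + b*x*y + c*y^2" by (simp add: f subst_def)
  ultimately show ?thesis using cop by metis
qed

lemma disc_qclass: "f' \<in> qclass f \<Longrightarrow> disc f' = disc f"
  unfolding qclass_def by (auto simp: disc_subst)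

lemma disc_neg4_middle_even:
  assumes "disc (A, B, C) = -4*n" obtains B0 where "B = 2*B0" and "B0^2 + n = A*C"
proof -
  have e: "B^2 - 4*A*C = -4*n" using assms by (simp add: disc_def)
  then have "B^2 = 2*(2*A*C - 2*n)" by (simp add: algebra_simps)
  then have "even B" by (metis dvd_triv_left even_power pos2)
  then obtain B0 where "B = 2*B0" by blast
  moreover have "B0^2 + n = A*C" using e calculation by (simp add: power2_eq_square algebra_simps)
  ultimately show ?thesis using that by blast
qed

lemma dirichlet_comp_disc_pos:
  assumes "dirichlet_comp f g F"
  shows "disc g = disc f" "disc F = disc f" "fst f > 0" "fst g > 0" "fst F > 0"
  using assms by (auto simp: dirichlet_comp_def disc_def split: prod.splits)

lemma first_coeff_coprime_disc:
  fixes A B C n :: int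
  assumes cop: "coprime A (4*n)" and d: "disc (A, B, C) = -4*n" and n: "n > 0" and A: "A \<ge> 0"
  shows "A > 0" and "coprime A B"
proof -
  show "A > 0"
  proof (rule ccontr)
    assume "\<not> A > 0"
    then have "is_unit (4*n)" using cop A by simp
    then show False using n by (simp add: zmult_eq_1_iff)
  qed
  show "coprime A B"
  proof (rule coprime_by_primes)
    fix p assume p: "prime p" "p dvd A" "p dvd B"
    then have "p dvd B^2 - 4*A*C" by (simp add: power2_eq_square)
    then have "p dvd 4*n" using d by (simp add: disc_def)
    then show False using cop p by (meson coprime_common_divisor not_prime_unit)
  qed
qed

lemma derived_class_rep_coprime:
  assumes "derived_from h (qclass f0) s" and "h = qclass h1" and "primitive h1" and "M \<noteq> 0"
  obtains \<alpha> \<beta> \<gamma> \<delta> where "\<alpha>*\<delta> - \<beta>*\<gamma> = s" and "h = qclass (subst f0 \<alpha> \<beta> \<gamma> \<delta>)"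
    and "coprime (fst (subst f0 \<alpha> \<beta> \<gamma> \<delta>)) M"
proof -
  obtain f where "f \<in> h" and "coprime (fst f) M"
    using qclass_member_first_coeff_coprime[OF assms(3,4)] assms(2) by auto
  moreover from derived_from_qclass_member[OF assms(1,2) \<open>f \<in> h\<close>]
  obtain \<alpha> \<beta> \<gamma> \<delta> where "\<alpha>*\<delta> - \<beta>*\<gamma> = s" "f = subst f0 \<alpha> \<beta> \<gamma> \<delta>" by blast
  ultimately show ?thesis using that assms(2) qclass_eq by metis
qed

section \<open>Lattices attached to forms\<close>

definition imag_sqrt :: "int \<Rightarrow> complex" where
  "imag_sqrt n = \<i> * complex_of_real (sqrt (real_of_int n))"

lemma imag_sqrt_squared: "n \<ge> 0 \<Longrightarrow> (imag_sqrt n)^2 = - of_int n"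
  by (simp add: imag_sqrt_def power_mult_distrib flip: of_real_power)

lemma Re_imag_sqrt [simp]: "Re (imag_sqrt n) = 0"
  and Im_imag_sqrt [simp]: "Im (imag_sqrt n) = sqrt (real_of_int n)"
  and cnj_imag_sqrt [simp]: "cnj (imag_sqrt n) = - imag_sqrt n"
  by (simp_all add: imag_sqrt_def)

lemma imag_sqrt_scale: "s \<ge> 0 \<Longrightarrow> b \<ge> 0 \<Longrightarrow> imag_sqrt (s^2 * b) = of_int s * imag_sqrt b"
  by (simp add: imag_sqrt_def real_sqrt_mult)

definition zspan :: "complex \<Rightarrow> complex \<Rightarrow> complex set" where
  "zspan a b = {of_int x * a + of_int y * b | x y. True}"

text \<open>Sums of two products suffice: for lattices of rank two they already give the whole
  product lattice (\<open>lattice_mult_zspan\<close>).\<close>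
definition lattice_mult :: "complex set \<Rightarrow> complex set \<Rightarrow> complex set" where
  "lattice_mult S T = {s1*t1 + s2*t2 | s1 t1 s2 t2. s1 \<in> S \<and> t1 \<in> T \<and> s2 \<in> S \<and> t2 \<in> T}"

text \<open>Proper equivalence becomes homothety and Dirichlet composition becomes multiplication
  of lattices; this is how the independence of \<open>cmul\<close> from its SOME-choice is established.\<close>
definition form_lattice :: "int \<Rightarrow> qform \<Rightarrow> complex set" where
  "form_lattice n q = (case q of (A, B, C) \<Rightarrow> zspan (of_int A) (of_int (B div 2) + imag_sqrt n))"

lemma zspan_mem_left: "a \<in> zspan a b"
  unfolding zspan_def by (rule CollectI, rule exI[of _ 1], rule exI[of _ 0]) simp

lemma zspan_mem_right: "b \<in> zspan a b"
  unfolding zspan_def by (rule CollectI, rule exI[of _ 0], rule exI[of _ 1]) simp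

lemma zspan_scale: "zspan (l*a) (l*b) = (\<lambda>z. l*z) ` zspan a b"
proof -
  have "of_int x * (l*a) + of_int y * (l*b) = l * (of_int x * a + of_int y * b)" for x y
    by (simp add: algebra_simps)
  then show ?thesis unfolding zspan_def by (auto simp: image_iff)
qed

lemma zspan_integral_combination_subset:
  "zspan (of_int \<alpha>*a + of_int \<gamma>*b) (of_int \<beta>*a + of_int \<delta>*b) \<subseteq> zspan a b"
proof
  fix z assume "z \<in> zspan (of_int \<alpha>*a + of_int \<gamma>*b) (of_int \<beta>*a + of_int \<delta>*b)"
  then obtain x y where "z = of_int x * (of_int \<alpha>*a + of_int \<gamma>*b)
      + of_int y * (of_int \<beta>*a + of_int \<delta>*b)"
    unfolding zspan_def by blast
  then have "z = of_int (x*\<alpha> + y*\<beta>) * a + of_int (x*\<gamma> + y*\<delta>) * b"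
    by (simp add: algebra_simps)
  then show "z \<in> zspan a b" unfolding zspan_def by blast
qed

lemma zspan_unimodular:
  assumes "\<alpha>*\<delta> - \<beta>*\<gamma> = (1::int)"
  shows "zspan (of_int \<alpha>*a + of_int \<gamma>*b) (of_int \<beta>*a + of_int \<delta>*b) = zspan a b"
proof
  define u where "u = of_int \<alpha>*a + of_int \<gamma>*b"
  define v where "v = of_int \<beta>*a + of_int \<delta>*b"
  have "of_int \<delta>*u + of_int (-\<gamma>)*v = of_int (\<alpha>*\<delta> - \<beta>*\<gamma>) * a"
    and "of_int (-\<beta>)*u + of_int \<alpha>*v = of_int (\<alpha>*\<delta> - \<beta>*\<gamma>) * b"
    unfolding u_def v_def by (simp_all add: algebra_simps)
  then have "zspan a b = zspan (of_int \<delta>*u + of_int (-\<gamma>)*v) (of_int (-\<beta>)*u + of_int \<alpha>*v)"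
    using assms by simp
  then show "zspan a b \<subseteq> zspan u v"
    using zspan_integral_combination_subset[of \<delta> u "-\<gamma>" v "-\<beta>" \<alpha>] by simp
qed (rule zspan_integral_combination_subset)

lemma lattice_mult_zspan: "lattice_mult (zspan a b) (zspan c d) =
   {of_int x1*(a*c) + of_int x2*(a*d) + of_int x3*(b*c) + of_int x4*(b*d) | x1 x2 x3 x4. True}"
  (is "_ = ?span")
proof
  show "lattice_mult (zspan a b) (zspan c d) \<subseteq> ?span"
  proof
    fix z assume "z \<in> lattice_mult (zspan a b) (zspan c d)"
    then obtain p1 q1 p2 q2 p3 q3 p4 q4
      where z: "z = (of_int p1 * a + of_int q1 * b) * (of_int p2 * c + of_int q2 * d)
        + (of_int p3 * a + of_int q3 * b) * (of_int p4 * c + of_int q4 * d)"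
      unfolding lattice_mult_def zspan_def by blast
    have "z = of_int (p1*p2 + p3*p4)*(a*c) + of_int (p1*q2 + p3*q4)*(a*d)
        + of_int (q1*p2 + q3*p4)*(b*c) + of_int (q1*q2 + q3*q4)*(b*d)"
      unfolding z by (simp add: algebra_simps)
    then show "z \<in> ?span" by blast
  qed
next
  show "?span \<subseteq> lattice_mult (zspan a b) (zspan c d)"
  proof
    fix z assume "z \<in> ?span"
    then obtain x1 x2 x3 x4
      where "z = of_int x1*(a*c) + of_int x2*(a*d) + of_int x3*(b*c) + of_int x4*(b*d)"
      by blast
    then have "z = a * (of_int x1 * c + of_int x2 * d) + b * (of_int x3 * c + of_int x4 * d)"
      by (simp add: algebra_simps)
    moreover have "of_int x1 * c + of_int x2 * d \<in> zspan c d"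
      "of_int x3 * c + of_int x4 * d \<in> zspan c d"
      unfolding zspan_def by blast+
    ultimately show "z \<in> lattice_mult (zspan a b) (zspan c d)"
      unfolding lattice_mult_def using zspan_mem_left zspan_mem_right by blast
  qed
qed

lemma lattice_mult_scale:
  "lattice_mult ((\<lambda>z. l*z) ` S) ((\<lambda>z. m*z) ` T) = (\<lambda>z. (l*m)*z) ` lattice_mult S T"
proof -
  have eq: "(l*s1)*(m*t1) + (l*s2)*(m*t2) = (l*m)*(s1*t1 + s2*t2)" for s1 t1 s2 t2
    by (simp add: algebra_simps)
  show ?thesis
  proof
    show "lattice_mult ((\<lambda>z. l*z) ` S) ((\<lambda>z. m*z) ` T) \<subseteq> (\<lambda>z. (l*m)*z) ` lattice_mult S T"
      unfolding lattice_mult_def using eq by blast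
  next
    show "(\<lambda>z. (l*m)*z) ` lattice_mult S T \<subseteq> lattice_mult ((\<lambda>z. l*z) ` S) ((\<lambda>z. m*z) ` T)"
    proof
      fix z assume "z \<in> (\<lambda>z. (l*m)*z) ` lattice_mult S T"
      then obtain s1 t1 s2 t2 where "s1 \<in> S" "t1 \<in> T" "s2 \<in> S" "t2 \<in> T"
        and "z = (l*s1)*(m*t1) + (l*s2)*(m*t2)"
        unfolding lattice_mult_def eq by blast
      then show "z \<in> lattice_mult ((\<lambda>z. l*z) ` S) ((\<lambda>z. m*z) ` T)"
        unfolding lattice_mult_def by blast
    qed
  qed
qed

lemma zspan_four_generators:
  assumes "g2 = of_int k2 * u + of_int m2 * v" "g3 = of_int k3 * u + of_int m3 * v"
    and "g4 = of_int k4 * u + of_int m4 * v" and bez: "m2*p + m3*q + m4*r = (1::int)"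
  shows "{of_int x1*u + of_int x2*g2 + of_int x3*g3 + of_int x4*g4 | x1 x2 x3 x4. True} = zspan u v"
    (is "?span = _")
proof
  show "?span \<subseteq> zspan u v"
  proof
    fix z assume "z \<in> ?span"
    then obtain x1 x2 x3 x4 where "z = of_int x1*u + of_int x2*g2 + of_int x3*g3 + of_int x4*g4"
      by blast
    then have "z = of_int (x1 + x2*k2 + x3*k3 + x4*k4) * u + of_int (x2*m2 + x3*m3 + x4*m4) * v"
      using assms(1-3) by (simp add: algebra_simps)
    then show "z \<in> zspan u v" unfolding zspan_def by blast
  qed
next
  show "zspan u v \<subseteq> ?span"
  proof
    fix z assume "z \<in> zspan u v"
    then obtain x y where z: "z = of_int x * u + of_int y * v" unfolding zspan_def by blast
    define K where "K = p*k2 + q*k3 + r*k4"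
    have "of_int (x - y*K)*u + of_int (y*p)*g2 + of_int (y*q)*g3 + of_int (y*r)*g4
        = of_int x * u + of_int y * of_int (m2*p + m3*q + m4*r) * v"
      using assms(1-3) unfolding K_def by (simp add: algebra_simps)
    then show "z \<in> ?span" using bez z
      by (metis (mono_tags, lifting) mem_Collect_eq mult.right_neutral of_int_1)
  qed
qed

lemma form_lattice_basis_products:
  assumes n: "n \<ge> 0" and B: "B = 2*B0" and B0: "B0^2 + n = A*C"
    and s: "subst (A, B, C) x1 x2 y1 y2 = (A1, B1, C1)"
  defines "\<xi> \<equiv> of_int x1 * of_int A + of_int y1 * (of_int B0 + imag_sqrt n)"
    and "\<eta> \<equiv> of_int x2 * of_int A + of_int y2 * (of_int B0 + imag_sqrt n)"
  shows "cnj \<xi> * \<xi> = of_int A * of_int A1"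
    and "cnj \<xi> * \<eta> = of_int A * (of_int (B1 div 2) + of_int (x1*y2 - x2*y1) * imag_sqrt n)"
proof -
  have t2: "imag_sqrt n ^ 2 + of_int n = 0" using n imag_sqrt_squared by simp
  have B0c: "(of_int B0)^2 + of_int n - of_int A * of_int C = (0::complex)"
    using B0 by (metis diff_self of_int_add of_int_mult of_int_power)
  have A1: "A1 = A*x1^2 + 2*B0*x1*y1 + C*y1^2"
    and B1: "B1 div 2 = A*x1*x2 + B0*(x1*y2 + x2*y1) + C*y1*y2"
    using s B by (auto simp: subst_def algebra_simps power2_eq_square)
  have "(x*a + y*(e - t))*(x*a + y*(e + t))
      = a*(a*x^2 + 2*e*x*y + c*y^2) + y^2*(e^2 + m - a*c) - y^2*(t^2 + m)"
    for x y a e c m t :: complex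
    by (simp add: algebra_simps power2_eq_square)
  from this[where x="of_int x1" and y="of_int y1" and a="of_int A" and e="of_int B0"
      and c="of_int C" and m="of_int n" and t="imag_sqrt n"]
  show "cnj \<xi> * \<xi> = of_int A * of_int A1"
    unfolding \<xi>_def A1 using t2 B0c by simp
  have "(p*a + q*(e - t))*(p'*a + q'*(e + t))
      = a*((a*p*p' + e*(p*q' + p'*q) + c*q*q') + (p*q' - p'*q)*t)
        + q*q'*(e^2 + m - a*c) - q*q'*(t^2 + m)"
    for p q p' q' a e c m t :: complex
    by (simp add: algebra_simps power2_eq_square)
  from this[where p="of_int x1" and q="of_int y1" and p'="of_int x2" and q'="of_int y2"
      and a="of_int A" and e="of_int B0" and c="of_int C" and m="of_int n" and t="imag_sqrt n"]
  show "cnj \<xi> * \<eta> = of_int A * (of_int (B1 div 2) + of_int (x1*y2 - x2*y1) * imag_sqrt n)"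
    unfolding \<xi>_def \<eta>_def B1 using t2 B0c by simp
qed

lemma form_lattice_qclass_homothetic:
  assumes n: "n \<ge> 0" and d: "disc f = -4*n" and A: "fst f \<noteq> 0"
    and f': "f' \<in> qclass f" and A': "fst f' \<noteq> 0"
  shows "\<exists>l. form_lattice n f' = (\<lambda>z. l*z) ` form_lattice n f"
proof -
  obtain A B C where f: "f = (A, B, C)" by (cases f)
  obtain A' B' C' where f'e: "f' = (A', B', C')" by (cases f')
  obtain \<alpha> \<beta> \<gamma> \<delta> where det: "\<alpha>*\<delta> - \<beta>*\<gamma> = 1" and s: "subst (A, B, C) \<alpha> \<beta> \<gamma> \<delta> = (A', B', C')"
    using f' unfolding f f'e qclass_def by auto
  obtain B0 where B: "B = 2*B0" and B0: "B0^2 + n = A*C"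
    using disc_neg4_middle_even d unfolding f by blast
  define t where "t = imag_sqrt n"
  define \<xi> where "\<xi> = of_int \<alpha> * of_int A + of_int \<gamma> * (of_int B0 + t)"
  define \<eta> where "\<eta> = of_int \<beta> * of_int A + of_int \<delta> * (of_int B0 + t)"
  have e1: "cnj \<xi> * \<xi> = of_int A * of_int A'"
    and e2: "cnj \<xi> * \<eta> = of_int A * (of_int (B' div 2) + t)"
    using form_lattice_basis_products[OF n B B0 s] det unfolding \<xi>_def \<eta>_def t_def by simp_all
  have "\<xi> \<noteq> 0" using e1 A A' f f'e by auto
  define l where "l = of_int A' / \<xi>"
  have l1: "l * \<xi> = of_int A'" using \<open>\<xi> \<noteq> 0\<close> by (simp add: l_def)
  have "of_int A * (\<xi> * (of_int (B' div 2) + t)) = \<xi> * (cnj \<xi> * \<eta>)"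
    using e2 by (simp add: ac_simps)
  also have "\<dots> = (cnj \<xi> * \<xi>) * \<eta>" by (simp add: ac_simps)
  also have "\<dots> = of_int A * (of_int A' * \<eta>)" using e1 by (simp add: ac_simps)
  finally have "\<xi> * (of_int (B' div 2) + t) = of_int A' * \<eta>" using A f by simp
  then have "l * \<eta> = of_int (B' div 2) + t"
    using \<open>\<xi> \<noteq> 0\<close> unfolding l_def by (simp add: field_simps)
  then have "form_lattice n f' = zspan (l*\<xi>) (l*\<eta>)"
    using l1 by (simp add: form_lattice_def f'e t_def)
  also have "\<dots> = (\<lambda>z. l*z) ` zspan \<xi> \<eta>" by (rule zspan_scale)
  also have "zspan \<xi> \<eta> = form_lattice n f"
    unfolding \<xi>_def \<eta>_def zspan_unimodular[OF det] by (simp add: form_lattice_def f B t_def)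
  finally show ?thesis by blast
qed

lemma form_lattice_coords_unique:
  assumes n: "n > 0" and A: "A \<noteq> 0"
    and e: "of_int x * of_int A + of_int y * (of_int B0 + imag_sqrt n)
      = of_int x' * of_int A + of_int y' * (of_int B0 + imag_sqrt n)"
  shows "x = x' \<and> y = y'"
proof -
  have "real_of_int y * sqrt (real_of_int n) = real_of_int y' * sqrt (real_of_int n)"
    using arg_cong[OF e, of Im] by simp
  moreover have "sqrt (real_of_int n) > 0" using n by simp
  ultimately have y: "y = y'" by simp
  then have "real_of_int x * real_of_int A = real_of_int x' * real_of_int A"
    using arg_cong[OF e, of Re] by simp
  with A y show ?thesis by simp
qed

lemma zspan_homothetic_basis:
  assumes indep: "\<And>x y x' y'. of_int x * u + of_int y * v = of_int x' * u + of_int y' * v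
      \<Longrightarrow> x = x' \<and> y = y'"
    and L: "zspan u' v' = (\<lambda>z. l*z) ` zspan u v" and "u' \<noteq> 0"
  obtains x1 y1 x2 y2 where "u' = l * (of_int x1 * u + of_int y1 * v)"
    and "v' = l * (of_int x2 * u + of_int y2 * v)" and "x1*y2 - x2*y1 = 1 \<or> x1*y2 - x2*y1 = -1"
proof -
  have "u' \<in> (\<lambda>z. l*z) ` zspan u v" "v' \<in> (\<lambda>z. l*z) ` zspan u v"
    using L zspan_mem_left zspan_mem_right by metis+
  then obtain x1 y1 x2 y2 where 1: "u' = l * (of_int x1 * u + of_int y1 * v)"
    and 2: "v' = l * (of_int x2 * u + of_int y2 * v)"
    unfolding zspan_def by blast
  have "l \<noteq> 0" using 1 \<open>u' \<noteq> 0\<close> by auto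
  have "l * u \<in> zspan u' v'" "l * v \<in> zspan u' v'"
    using L zspan_mem_left zspan_mem_right by (metis imageI)+
  then obtain x3 y3 x4 y4 where 3: "l * u = of_int x3 * u' + of_int y3 * v'"
    and 4: "l * v = of_int x4 * u' + of_int y4 * v'"
    unfolding zspan_def by blast
  have "l * (of_int 1 * u + of_int 0 * v)
      = l * (of_int (x3*x1 + y3*x2) * u + of_int (x3*y1 + y3*y2) * v)"
    using 3 unfolding 1 2 by (simp add: algebra_simps)
  then have "of_int 1 * u + of_int 0 * v = of_int (x3*x1 + y3*x2) * u + of_int (x3*y1 + y3*y2) * v"
    by (rule mult_left_cancel[OF \<open>l \<noteq> 0\<close>, THEN iffD1])
  from indep[OF this] have P1: "x3*x1 + y3*x2 = 1" "x3*y1 + y3*y2 = 0" by simp_all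
  have "l * (of_int 0 * u + of_int 1 * v)
      = l * (of_int (x4*x1 + y4*x2) * u + of_int (x4*y1 + y4*y2) * v)"
    using 4 unfolding 1 2 by (simp add: algebra_simps)
  then have "of_int 0 * u + of_int 1 * v = of_int (x4*x1 + y4*x2) * u + of_int (x4*y1 + y4*y2) * v"
    by (rule mult_left_cancel[OF \<open>l \<noteq> 0\<close>, THEN iffD1])
  from indep[OF this] have P2: "x4*x1 + y4*x2 = 0" "x4*y1 + y4*y2 = 1" by simp_all
  have "(x1*y2 - x2*y1) * (x3*y4 - x4*y3)
      = (x3*x1 + y3*x2)*(x4*y1 + y4*y2) - (x4*x1 + y4*x2)*(x3*y1 + y3*y2)"
    by (simp add: algebra_simps)
  then have "(x1*y2 - x2*y1) * (x3*y4 - x4*y3) = 1" using P1 P2 by simp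
  then have "x1*y2 - x2*y1 = 1 \<or> x1*y2 - x2*y1 = -1" by (rule pos_zmult_eq_1_iff_lemma)
  then show ?thesis by (rule that[OF 1 2])
qed

lemma homothetic_form_lattices_basis:
  assumes n: "n > 0" and A: "A \<noteq> 0" and A': "A' \<noteq> 0"
    and L: "form_lattice n (A', B', C') = (\<lambda>z. l*z) ` form_lattice n (A, B, C)"
  obtains x1 y1 x2 y2
  where "of_int A' = l * (of_int x1 * of_int A + of_int y1 * (of_int (B div 2) + imag_sqrt n))"
    and "of_int (B' div 2) + imag_sqrt n
      = l * (of_int x2 * of_int A + of_int y2 * (of_int (B div 2) + imag_sqrt n))"
    and "x1*y2 - x2*y1 = 1 \<or> x1*y2 - x2*y1 = -1"
proof -
  have indep: "x = x' \<and> y = y'"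
    if "of_int x * of_int A + of_int y * (of_int (B div 2) + imag_sqrt n)
      = of_int x' * of_int A + of_int y' * (of_int (B div 2) + imag_sqrt n)" for x y x' y'
    using form_lattice_coords_unique[OF n A that] .
  have "of_int A' \<noteq> (0::complex)" using A' by simp
  with zspan_homothetic_basis[OF indep L[unfolded form_lattice_def prod.case]] that show ?thesis
    by blast
qed

lemma cnj_mult_scale: "cnj (l * u) * (l * v) = of_real ((cmod l)^2) * (cnj u * v)"
proof -
  have "cnj (l * u) * (l * v) = (cnj l * l) * (cnj u * v)" by (simp add: algebra_simps)
  also have "cnj l * l = of_real ((cmod l)^2)" by (metis complex_norm_square mult.commute)
  finally show ?thesis .
qed

text \<open>The determinant of the basis change is \<open>\<pm>1\<close>; comparing the imaginary parts of
  \<open>A' \<cdot> (B'/2 + \<surd>-n)\<close> computed in both bases shows that it is \<open>+1\<close>, because \<open>A, A' > 0\<close>.\<close>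
lemma homothetic_form_lattices_equiv:
  assumes n: "n > 0" and d: "disc F = -4*n" and d': "disc F' = -4*n"
    and A: "fst F > 0" and A': "fst F' > 0"
    and L: "form_lattice n F' = (\<lambda>z. l*z) ` form_lattice n F"
  shows "F' \<in> qclass F"
proof -
  obtain A B C where F: "F = (A, B, C)" by (cases F)
  obtain A' B' C' where F': "F' = (A', B', C')" by (cases F')
  obtain B0 where B: "B = 2*B0" and B0: "B0^2 + n = A*C"
    using disc_neg4_middle_even d unfolding F by blast
  obtain B0' where B': "B' = 2*B0'" using disc_neg4_middle_even d' unfolding F' by blast
  define t where "t = imag_sqrt n"
  have "A \<noteq> 0" "A' \<noteq> 0" using A A' F F' by simp_all
  obtain x1 y1 x2 y2
    where u': "of_int A' = l * (of_int x1 * of_int A + of_int y1 * (of_int (B div 2) + t))"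
      and v': "of_int (B' div 2) + t
        = l * (of_int x2 * of_int A + of_int y2 * (of_int (B div 2) + t))"
      and dt: "x1*y2 - x2*y1 = 1 \<or> x1*y2 - x2*y1 = -1"
    unfolding t_def by (rule homothetic_form_lattices_basis[OF n \<open>A \<noteq> 0\<close> \<open>A' \<noteq> 0\<close> L[unfolded F F']])
  define dd where "dd = x1*y2 - x2*y1"
  obtain A1 B1 C1 where s: "subst (A, B, C) x1 x2 y1 y2 = (A1, B1, C1)" by (metis prod_cases3)
  define \<xi> where "\<xi> = of_int x1 * of_int A + of_int y1 * (of_int B0 + t)"
  define \<eta> where "\<eta> = of_int x2 * of_int A + of_int y2 * (of_int B0 + t)"
  have e1: "cnj \<xi> * \<xi> = of_int A * of_int A1"
    and e2: "cnj \<xi> * \<eta> = of_int A * (of_int (B1 div 2) + of_int dd * t)"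
    using form_lattice_basis_products[OF _ B B0 s] n unfolding \<xi>_def \<eta>_def dd_def t_def by simp_all
  have 1: "of_int A' = l * \<xi>" and 2: "of_int B0' + t = l * \<eta>"
    using u' v' by (simp_all add: \<xi>_def \<eta>_def B B')
  define k where "k = (cmod l)^2"
  have "k > 0" using 1 A' F' by (auto simp: k_def)
  have "of_int A' * (of_int B0' + t) = cnj (l * \<xi>) * (l * \<eta>)"
    unfolding 2 1[symmetric] by simp
  then have E1: "of_int A' * (of_int B0' + t)
      = of_real k * (of_int A * (of_int (B1 div 2) + of_int dd * t))"
    using cnj_mult_scale[of l \<xi> \<eta>] e2 by (simp add: k_def)
  have "(of_int A' * of_int A' :: complex) = cnj (l * \<xi>) * (l * \<xi>)"
    unfolding 1[symmetric] by simp
  then have E2: "(of_int A' * of_int A' :: complex) = of_real k * (of_int A * of_int A1)"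
    using cnj_mult_scale[of l \<xi> \<xi>] e1 by (simp add: k_def)
  have iA: "real_of_int A' = k * real_of_int A * real_of_int dd"
    using arg_cong[OF E1, of Im] n by (simp add: t_def mult.assoc)
  have "dd = 1"
  proof (rule ccontr)
    assume "dd \<noteq> 1"
    with dt have "dd = -1" by (simp add: dd_def)
    moreover have "k * real_of_int A > 0" using \<open>k > 0\<close> A F by simp
    ultimately show False using iA A' F' by simp
  qed
  then have A'k: "real_of_int A' = k * real_of_int A" using iA by simp
  have "B1 div 2 = B0'"
    using arg_cong[OF E1, of Re] A'k \<open>k > 0\<close> \<open>A \<noteq> 0\<close> \<open>dd = 1\<close> by (simp add: t_def)
  moreover have "even B1" using s B by (auto simp: subst_def)
  ultimately have B1: "B1 = B'" using B' by fastforce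
  have A1: "A1 = A'"
    using arg_cong[OF E2, of Re] A'k \<open>k > 0\<close> \<open>A \<noteq> 0\<close> by simp
  have "disc (A1, B1, C1) = -4*n"
    using disc_subst[of "(A, B, C)" x1 x2 y1 y2] d s F \<open>dd = 1\<close> by (simp add: dd_def)
  then have "4*A'*C1 = 4*A'*C'"
    using d' unfolding disc_def F' A1 B1 by (simp only: prod.case)
  then have "(A1, B1, C1) = F'" using A' F' A1 B1 by simp
  then show ?thesis using subst_in_qclass[of x1 y2 x2 y1 F] s F \<open>dd = 1\<close> by (simp add: dd_def)
qed

lemma form_lattice_dirichlet_comp:
  assumes n: "n \<ge> 0" and dc: "dirichlet_comp f g F" and d: "disc f = -4*n"
  shows "form_lattice n F = lattice_mult (form_lattice n f) (form_lattice n g)"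
proof -
  obtain a1 b1 c1 where f: "f = (a1, b1, c1)" by (cases f)
  obtain a2 b2 c2 where g: "g = (a2, b2, c2)" by (cases g)
  obtain A B C where F: "F = (A, B, C)" by (cases F)
  from dc have g1: "gcd a1 (gcd a2 ((b1 + b2) div 2)) = 1"
    and Ae: "A = a1*a2" and c1: "[B = b1] (mod 2*a1)" and c2: "[B = b2] (mod 2*a2)"
    unfolding dirichlet_comp_def f g F by auto
  have dg: "disc (a2, b2, c2) = -4*n" and dF: "disc (A, B, C) = -4*n"
    using dirichlet_comp_disc_pos[OF dc] d f g F by simp_all
  obtain e1 where b1: "b1 = 2*e1" using disc_neg4_middle_even d unfolding f by blast
  obtain e2 where b2: "b2 = 2*e2" using disc_neg4_middle_even dg by blast
  obtain E where BE: "B = 2*E" and E: "E^2 + n = A*C" using disc_neg4_middle_even dF by blast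
  obtain t1 where t1: "B - b1 = (2*a1)*t1" using c1 unfolding cong_iff_dvd_diff by blast
  obtain t2 where t2: "B - b2 = (2*a2)*t2" using c2 unfolding cong_iff_dvd_diff by blast
  have Et1: "e1 = E - a1*t1" and Et2: "e2 = E - a2*t2" using t1 t2 b1 b2 BE by simp_all
  define e where "e = e1 + e2"
  obtain u k where uk: "u*a1 + k*gcd a2 e = 1"
    using bezout_int[of a1 "gcd a2 e"] g1 b1 b2 by (auto simp: e_def)
  obtain v w where vw: "v*a2 + w*e = gcd a2 e" using bezout_int[of a2 e] by auto
  have "a1*u + a2*(k*v) + e*(k*w) = u*a1 + k*(v*a2 + w*e)" by (simp add: algebra_simps)
  then have bez: "a1*u + a2*(k*v) + e*(k*w) = 1" using uk vw by simp
  define t where "t = imag_sqrt n"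
  have t2n: "t^2 + of_int n = 0" using imag_sqrt_squared n t_def by simp
  define \<beta> where "\<beta> = of_int E + t"
  define \<beta>1 where "\<beta>1 = of_int e1 + t"
  define \<beta>2 where "\<beta>2 = of_int e2 + t"
  have I1: "of_int a1 * \<beta>2 = of_int (-t2) * of_int A + of_int a1 * \<beta>"
    and I2: "\<beta>1 * of_int a2 = of_int (-t1) * of_int A + of_int a2 * \<beta>"
    unfolding \<beta>1_def \<beta>2_def \<beta>_def Et1 Et2 Ae by (simp_all add: algebra_simps)
  have Ec: "(of_int E::complex)^2 + of_int n = of_int a1 * of_int a2 * of_int C"
    using E Ae by (metis of_int_add of_int_mult of_int_power)
  have "\<beta>1 * \<beta>2 - (of_int (t1*t2 - C) * of_int A + of_int e * \<beta>)
      = (t^2 + of_int n) - ((of_int E)^2 + of_int n - of_int a1 * of_int a2 * of_int C)"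
    unfolding \<beta>1_def \<beta>2_def \<beta>_def Et1 Et2 e_def Ae by (simp add: algebra_simps power2_eq_square)
  then have I3: "\<beta>1 * \<beta>2 = of_int (t1*t2 - C) * of_int A + of_int e * \<beta>"
    using t2n Ec by simp
  have "form_lattice n F = zspan (of_int A) \<beta>"
    by (simp add: form_lattice_def F BE \<beta>_def t_def)
  also have "\<dots> = {of_int x1*(of_int a1*of_int a2) + of_int x2*(of_int a1*\<beta>2)
      + of_int x3*(\<beta>1*of_int a2) + of_int x4*(\<beta>1*\<beta>2) | x1 x2 x3 x4. True}"
    using zspan_four_generators[OF I1 I2 I3 bez] Ae by simp
  also have "\<dots> = lattice_mult (form_lattice n f) (form_lattice n g)"
    by (simp add: lattice_mult_zspan form_lattice_def f g b1 b2 \<beta>1_def \<beta>2_def t_def)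
  finally show ?thesis .
qed

lemma cmul_qclass:
  assumes n: "n > 0" and df: "disc f = -4*n" and dc: "dirichlet_comp f g F"
  shows "cmul (qclass f) (qclass g) = qclass F"
proof -
  have "\<exists>Z. \<exists>f'\<in>qclass f. \<exists>g'\<in>qclass g. \<exists>F'. dirichlet_comp f' g' F' \<and> Z = qclass F'"
    using qclass_refl dc by blast
  from someI_ex[OF this] obtain f' g' F' where f': "f' \<in> qclass f" and g': "g' \<in> qclass g"
    and dc': "dirichlet_comp f' g' F'" and cm: "cmul (qclass f) (qclass g) = qclass F'"
    unfolding cmul_def by blast
  note pos = dirichlet_comp_disc_pos[OF dc] and pos' = dirichlet_comp_disc_pos[OF dc']
  have df': "disc f' = -4*n" using disc_qclass[OF f'] df by simp
  obtain l1 where l1: "form_lattice n f' = (\<lambda>z. l1*z) ` form_lattice n f"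
    using form_lattice_qclass_homothetic[OF _ df _ f'] n pos pos' by auto
  obtain l2 where l2: "form_lattice n g' = (\<lambda>z. l2*z) ` form_lattice n g"
    using form_lattice_qclass_homothetic[OF _ _ _ g'] n df pos pos' by auto
  have "form_lattice n F' = lattice_mult (form_lattice n f') (form_lattice n g')"
    using form_lattice_dirichlet_comp[OF _ dc' df'] n by simp
  also have "\<dots> = (\<lambda>z. (l1*l2)*z) ` lattice_mult (form_lattice n f) (form_lattice n g)"
    unfolding l1 l2 by (rule lattice_mult_scale)
  also have "lattice_mult (form_lattice n f) (form_lattice n g) = form_lattice n F"
    using form_lattice_dirichlet_comp[OF _ dc df] n by simp
  finally have "F' \<in> qclass F"
    using homothetic_form_lattices_equiv[OF n] pos pos' df df' by simp
  then show ?thesis using cm qclass_eq by simp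
qed

section \<open>The ring \<open>\<int>[\<surd>-b]\<close> and Frobenius\<close>

definition Zsqrt :: "int \<Rightarrow> complex set" where
  "Zsqrt b = {of_int u + of_int v * imag_sqrt b | u v. True}"
definition Zsqrt_order :: "int \<Rightarrow> int \<Rightarrow> complex set" where
  "Zsqrt_order b m = {of_int u + of_int (m*v) * imag_sqrt b | u v. True}"
definition Zsqrt_ideal :: "int \<Rightarrow> int \<Rightarrow> complex set" where
  "Zsqrt_ideal b m = {of_int m * z | z. z \<in> Zsqrt b}"

lemma Zsqrt_memI: "of_int u + of_int v * imag_sqrt b \<in> Zsqrt b" unfolding Zsqrt_def by blast

lemma Zsqrt_of_int: "of_int u \<in> Zsqrt b" using Zsqrt_memI[of u 0 b] by simp

lemma Zsqrt_imag_sqrt: "imag_sqrt b \<in> Zsqrt b" using Zsqrt_memI[of 0 1 b] by simp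

lemma Zsqrt_add: "x \<in> Zsqrt b \<Longrightarrow> y \<in> Zsqrt b \<Longrightarrow> x + y \<in> Zsqrt b"
proof -
  assume "x \<in> Zsqrt b" "y \<in> Zsqrt b"
  then obtain u1 v1 u2 v2 where "x = of_int u1 + of_int v1 * imag_sqrt b"
    "y = of_int u2 + of_int v2 * imag_sqrt b"
    unfolding Zsqrt_def by blast
  then have "x + y = of_int (u1+u2) + of_int (v1+v2) * imag_sqrt b" by (simp add: algebra_simps)
  then show ?thesis using Zsqrt_memI by metis
qed

lemma Zsqrt_diff: "x \<in> Zsqrt b \<Longrightarrow> y \<in> Zsqrt b \<Longrightarrow> x - y \<in> Zsqrt b"
proof -
  assume "x \<in> Zsqrt b" "y \<in> Zsqrt b"
  then obtain u1 v1 u2 v2 where "x = of_int u1 + of_int v1 * imag_sqrt b"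
    "y = of_int u2 + of_int v2 * imag_sqrt b"
    unfolding Zsqrt_def by blast
  then have "x - y = of_int (u1-u2) + of_int (v1-v2) * imag_sqrt b" by (simp add: algebra_simps)
  then show ?thesis using Zsqrt_memI by metis
qed

lemma Zsqrt_mult: "b \<ge> 0 \<Longrightarrow> x \<in> Zsqrt b \<Longrightarrow> y \<in> Zsqrt b \<Longrightarrow> x * y \<in> Zsqrt b"
proof -
  assume b: "b \<ge> 0" and "x \<in> Zsqrt b" "y \<in> Zsqrt b"
  then obtain u1 v1 u2 v2 where xy: "x = of_int u1 + of_int v1 * imag_sqrt b"
    "y = of_int u2 + of_int v2 * imag_sqrt b"
    unfolding Zsqrt_def by blast
  have "x * y = of_int u1 * of_int u2 + of_int v1 * of_int v2 * (imag_sqrt b)^2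
      + of_int (u1*v2+u2*v1) * imag_sqrt b"
    unfolding xy by (simp add: algebra_simps power2_eq_square)
  also have "\<dots> = of_int (u1*u2 - v1*v2*b) + of_int (u1*v2+u2*v1) * imag_sqrt b"
    using imag_sqrt_squared[OF b] by simp
  finally show ?thesis using Zsqrt_memI by metis
qed

lemma Zsqrt_norm:
  assumes "b \<ge> 0"
  shows "(of_int u + of_int v * imag_sqrt b) * (of_int u - of_int v * imag_sqrt b)
      = of_int (u^2 + b*v^2)"
proof -
  have "(of_int u + of_int v * imag_sqrt b) * (of_int u - of_int v * imag_sqrt b)
      = of_int u ^ 2 - of_int v ^ 2 * imag_sqrt b ^ 2"
    by (simp add: algebra_simps power2_eq_square)
  then show ?thesis using imag_sqrt_squared[OF assms] by simp
qed

lemma Zsqrt_power: "b \<ge> 0 \<Longrightarrow> x \<in> Zsqrt b \<Longrightarrow> x ^ k \<in> Zsqrt b"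
  by (induction k) (auto intro: Zsqrt_mult Zsqrt_of_int[of 1, simplified])

lemma Zsqrt_ideal_memI: "z \<in> Zsqrt b \<Longrightarrow> of_int m * z \<in> Zsqrt_ideal b m"
  unfolding Zsqrt_ideal_def by blast

lemma Zsqrt_ideal_zero: "0 \<in> Zsqrt_ideal b m" using Zsqrt_ideal_memI[OF Zsqrt_of_int[of 0]] by simp

lemma Zsqrt_ideal_add: "x \<in> Zsqrt_ideal b m \<Longrightarrow> y \<in> Zsqrt_ideal b m \<Longrightarrow> x + y \<in> Zsqrt_ideal b m"
proof -
  assume "x \<in> Zsqrt_ideal b m" "y \<in> Zsqrt_ideal b m"
  then obtain z1 z2 where "z1 \<in> Zsqrt b" "z2 \<in> Zsqrt b" "x = of_int m * z1" "y = of_int m * z2"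
    unfolding Zsqrt_ideal_def by blast
  then show ?thesis using Zsqrt_ideal_memI[OF Zsqrt_add[of z1 b z2], of m]
    by (simp add: distrib_left)
qed

lemma Zsqrt_ideal_mult: "b \<ge> 0 \<Longrightarrow> x \<in> Zsqrt_ideal b m \<Longrightarrow> y \<in> Zsqrt b \<Longrightarrow> x * y \<in> Zsqrt_ideal b m"
proof -
  assume b: "b \<ge> 0" and "x \<in> Zsqrt_ideal b m" "y \<in> Zsqrt b"
  then obtain z1 where "z1 \<in> Zsqrt b" "x = of_int m * z1" unfolding Zsqrt_ideal_def by blast
  then show ?thesis using Zsqrt_ideal_memI[OF Zsqrt_mult[OF b, of z1 y], of m] \<open>y \<in> Zsqrt b\<close>
    by (simp add: mult.assoc)
qed

lemma Zsqrt_ideal_dvd: "m dvd c \<Longrightarrow> z \<in> Zsqrt b \<Longrightarrow> of_int c * z \<in> Zsqrt_ideal b m"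
proof -
  assume "m dvd c" "z \<in> Zsqrt b"
  then obtain k where "c = m * k" by blast
  then have "of_int c * z = of_int m * (of_int k * z)" by (simp add: mult.assoc)
  moreover have "of_int k * z \<in> Zsqrt b"
  proof -
    from \<open>z \<in> Zsqrt b\<close> obtain u v where "z = of_int u + of_int v * imag_sqrt b"
      unfolding Zsqrt_def by blast
    then have "of_int k * z = of_int (k*u) + of_int (k*v) * imag_sqrt b"
      by (simp add: algebra_simps)
    then show ?thesis using Zsqrt_memI by metis
  qed
  ultimately show ?thesis using Zsqrt_ideal_memI by metis
qed

lemma Zsqrt_ideal_sum: "finite S \<Longrightarrow> (\<And>k. k \<in> S \<Longrightarrow> f k \<in> Zsqrt_ideal b m) \<Longrightarrow> sum f S \<in> Zsqrt_ideal b m"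
  by (induction S rule: finite_induct) (auto intro: Zsqrt_ideal_add Zsqrt_ideal_zero)

lemma Zsqrt_order_memI: "of_int u + of_int (m*v) * imag_sqrt b \<in> Zsqrt_order b m"
  unfolding Zsqrt_order_def by blast

lemma Zsqrt_order_of_int: "of_int u \<in> Zsqrt_order b m" using Zsqrt_order_memI[of u m 0 b] by simp

lemma Zsqrt_order_add_ideal: "x \<in> Zsqrt_order b m \<Longrightarrow> y \<in> Zsqrt_ideal b m \<Longrightarrow> x + y \<in> Zsqrt_order b m"
proof -
  assume "x \<in> Zsqrt_order b m" "y \<in> Zsqrt_ideal b m"
  then obtain u1 v1 u2 v2 where xy: "x = of_int u1 + of_int (m*v1) * imag_sqrt b"
    "y = of_int m * (of_int u2 + of_int v2 * imag_sqrt b)"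
    unfolding Zsqrt_order_def Zsqrt_ideal_def Zsqrt_def by blast
  then have "x + y = of_int (u1 + m*u2) + of_int (m*(v1+v2)) * imag_sqrt b"
    by (simp add: algebra_simps)
  then show ?thesis using Zsqrt_order_memI by metis
qed

lemma Zsqrt_order_mult: "b \<ge> 0 \<Longrightarrow> x \<in> Zsqrt_order b m \<Longrightarrow> y \<in> Zsqrt_order b m \<Longrightarrow> x * y
    \<in> Zsqrt_order b m"
proof -
  assume b: "b \<ge> 0" and "x \<in> Zsqrt_order b m" "y \<in> Zsqrt_order b m"
  then obtain u1 v1 u2 v2 where xy: "x = of_int u1 + of_int (m*v1) * imag_sqrt b"
    "y = of_int u2 + of_int (m*v2) * imag_sqrt b"
    unfolding Zsqrt_order_def by blast
  have "x * y = of_int u1 * of_int u2 + of_int (m*v1) * of_int (m*v2) * (imag_sqrt b)^2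
      + of_int (m*(u1*v2+u2*v1)) * imag_sqrt b"
    unfolding xy by (simp add: algebra_simps power2_eq_square)
  also have "\<dots> = of_int (u1*u2 - m*v1*(m*v2)*b) + of_int (m*(u1*v2+u2*v1)) * imag_sqrt b"
    using imag_sqrt_squared[OF b] by simp
  finally show ?thesis using Zsqrt_order_memI by metis
qed

lemma Zsqrt_order_power: "b \<ge> 0 \<Longrightarrow> x \<in> Zsqrt_order b m \<Longrightarrow> x ^ k \<in> Zsqrt_order b m"
  by (induction k) (auto intro: Zsqrt_order_mult Zsqrt_order_of_int[of 1, simplified])

lemma Zsqrt_coords_unique:
  assumes b: "b > 0"
    and e: "of_int u + of_int v * imag_sqrt b = of_int u' + of_int v' * imag_sqrt b"
  shows "u = u' \<and> v = v'"
proof -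
  have "Im (of_int u + of_int v * imag_sqrt b) = Im (of_int u' + of_int v' * imag_sqrt b)" using e
    by simp
  then have "real_of_int v * sqrt (real_of_int b) = real_of_int v' * sqrt (real_of_int b)" by simp
  moreover have "sqrt (real_of_int b) > 0" using b by simp
  ultimately have "v = v'" by simp
  moreover have "Re (of_int u + of_int v * imag_sqrt b) = Re (of_int u' + of_int v' * imag_sqrt b)"
    using e by simp
  ultimately show ?thesis by simp
qed

lemma Zsqrt_order_coeff_dvd:
  assumes b: "b > 0" and x: "x \<in> Zsqrt_order b m" and e: "x = of_int u + of_int v * imag_sqrt b"
  shows "m dvd v"
proof -
  obtain u' v' where "x = of_int u' + of_int (m*v') * imag_sqrt b" using x unfolding Zsqrt_order_def
    by blast
  then have "v = m * v'" using Zsqrt_coords_unique[OF b, of u v u' "m*v'"] e by simp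
  then show ?thesis by simp
qed

lemma Zsqrt_ideal_cancel_coprime:
  assumes b: "b > 0" and x: "x \<in> Zsqrt b" and px: "of_int A * x \<in> Zsqrt_ideal b p"
    and cop: "coprime A p"
  shows "\<exists>c d. x = of_int (p*c) + of_int (p*d) * imag_sqrt b"
proof -
  obtain u v where xe: "x = of_int u + of_int v * imag_sqrt b" using x unfolding Zsqrt_def by blast
  obtain u' v' where "of_int A * x = of_int p * (of_int u' + of_int v' * imag_sqrt b)"
    using px unfolding Zsqrt_ideal_def Zsqrt_def by blast
  then have "of_int (A*u) + of_int (A*v) * imag_sqrt b
      = of_int (p*u') + of_int (p*v') * imag_sqrt b"
    unfolding xe by (simp add: algebra_simps)
  then have "A*u = p*u'" "A*v = p*v'" using Zsqrt_coords_unique[OF b] by blast+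
  then have "p dvd A*u" "p dvd A*v" by (metis dvd_triv_left)+
  then have "p dvd u" "p dvd v" using cop by (metis coprime_commute coprime_dvd_mult_right_iff)+
  then obtain c d where "u = p*c" "v = p*d" by (auto elim!: dvdE)
  then show ?thesis using xe by blast
qed

lemma fermat_int:
  fixes p :: nat and x :: int
  assumes p: "prime p" "p > 2" and nd: "\<not> int p dvd x"
  shows "[x^(p-1) = 1] (mod int p)"
proof -
  have pi: "prime (int p)" using p by simp
  have odd: "odd p" using prime_odd_nat p by blast
  have nz: "\<not> [x^2 = 0] (mod int p)"
  proof
    assume "[x^2 = 0] (mod int p)"
    then have "int p dvd x^2" by (simp add: cong_0_iff)
    then have "int p dvd x" using prime_dvd_power[OF pi] by blast
    then show False using nd by simp
  qed
  have "QuadRes (int p) (x^2)" unfolding QuadRes_def by (rule exI[of _ x]) simp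
  then have L: "Legendre (x^2) (int p) = 1" using nz unfolding Legendre_def by simp
  have "[Legendre (x^2) (int p) = (x^2) ^ ((p - 1) div 2)] (mod int p)"
    using euler_criterion[OF p] by blast
  moreover have "(x^2) ^ ((p - 1) div 2) = x^(p-1)"
  proof -
    obtain h where ph: "p = 2*h+1" using odd by (metis oddE)
    then show ?thesis by (simp add: power_mult)
  qed
  ultimately show ?thesis using L by (metis cong_sym)
qed

lemma fermat_little_int:
  fixes p :: nat and x :: int
  assumes p: "prime p" "p > 2"
  shows "[x^p = x] (mod int p)"
proof (cases "int p dvd x")
  case True
  then have "[x = 0] (mod int p)" by (simp add: cong_0_iff)
  moreover then have "[x^p = 0^p] (mod int p)" by (rule cong_pow)
  moreover have "(0::int)^p = 0" using p by simp
  ultimately have "[x^p = 0] (mod int p)" "[0 = x] (mod int p)" by (simp_all add: cong_sym)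
  then show ?thesis by (rule cong_trans)
next
  case False
  have "[x * x^(p-1) = x * 1] (mod int p)" using fermat_int[OF p False] by (rule cong_scalar_left)
  moreover have "x * x^(p-1) = x^p" using p by (cases p) simp_all
  ultimately show ?thesis by simp
qed

lemma binomial_split_top:
  "(a + c :: 'a::comm_ring_1)^p = a^p + (\<Sum>k<p. of_nat (p choose k) * a^k * c^(p-k))"
proof -
  have "(a + c)^p = (\<Sum>k\<le>p. of_nat (p choose k) * a^k * c^(p-k))" by (rule binomial_ring)
  also have "\<dots> = (\<Sum>k<Suc p. of_nat (p choose k) * a^k * c^(p-k))" by (simp add: lessThan_Suc_atMost)
  also have "\<dots> = (\<Sum>k<p. of_nat (p choose k) * a^k * c^(p-k)) + a^p" by simp
  finally show ?thesis by simp
qed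

lemma Zsqrt_pow_prime_additive:
  fixes p :: nat
  assumes b: "b \<ge> 0" and p: "prime p"
  shows "(of_int u + of_int v * imag_sqrt b)^p - (of_int u^p + (of_int v * imag_sqrt b)^p)
      \<in> Zsqrt_ideal b (int p)"
proof -
  define a where "a = (of_int u :: complex)"
  define c where "c = of_int v * imag_sqrt b"
  have aO: "a \<in> Zsqrt b" unfolding a_def by (rule Zsqrt_of_int)
  have cO: "c \<in> Zsqrt b" unfolding c_def using Zsqrt_memI[of 0 v b] by simp
  define f where "f k = of_nat (p choose k) * a^k * c^(p-k)" for k
  define g where "g k = (if k = 0 then c^p else (0::complex))" for k :: nat
  have sg: "(\<Sum>k<p. g k) = c^p" unfolding g_def using p prime_gt_0_nat by simp
  have "(\<Sum>k<p. f k - g k) \<in> Zsqrt_ideal b (int p)"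
  proof (rule Zsqrt_ideal_sum)
    fix k assume k: "k \<in> {..<p}"
    show "f k - g k \<in> Zsqrt_ideal b (int p)"
    proof (cases "k = 0")
      case True then show ?thesis by (simp add: f_def g_def Zsqrt_ideal_zero)
    next
      case False
      then have "p dvd (p choose k)" using dvd_choose_prime k p
        by (metis lessThan_iff prime_gt_0_nat neq0_conv)
      then have "int p dvd int (p choose k)" by simp
      moreover have "a^k * c^(p-k) \<in> Zsqrt b" using aO cO b by (intro Zsqrt_mult Zsqrt_power)
      ultimately have "of_int (int (p choose k)) * (a^k * c^(p-k)) \<in> Zsqrt_ideal b (int p)"
        by (rule Zsqrt_ideal_dvd)
      then show ?thesis using False by (simp add: f_def g_def mult.assoc)
    qed
  qed simp
  moreover have "(\<Sum>k<p. f k - g k) = (a + c)^p - (a^p + c^p)"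
    using binomial_split_top[of a c p] sg unfolding f_def by (simp add: sum_subtractf)
  ultimately show ?thesis unfolding a_def c_def by simp
qed

lemma imag_sqrt_pow_odd:
  assumes b: "b \<ge> 0" and odd: "odd p"
  shows "imag_sqrt b ^ p = of_int ((-b)^((p - 1) div 2)) * imag_sqrt b"
proof -
  obtain h where ph: "p = 2*h + 1" using odd by (metis oddE)
  have "imag_sqrt b ^ p = ((imag_sqrt b)^2)^h * imag_sqrt b" unfolding ph
    by (simp add: power_mult power_add)
  also have "\<dots> = of_int ((-b)^h) * imag_sqrt b" using imag_sqrt_squared[OF b] by simp
  finally show ?thesis using ph by simp
qed

lemma Zsqrt_frobenius:
  fixes p :: nat
  assumes b: "b \<ge> 0" and p: "prime p" "p > 2" and L: "[(-b)^((p - 1) div 2) = L] (mod int p)"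
  shows "(of_int u + of_int v * imag_sqrt b)^p - (of_int u + of_int (v*L) * imag_sqrt b)
      \<in> Zsqrt_ideal b (int p)"
proof -
  have odd: "odd p" using prime_odd_nat p by blast
  have e: "(of_int v * imag_sqrt b)^p = of_int (v^p * (-b)^((p - 1) div 2)) * imag_sqrt b"
    using imag_sqrt_pow_odd[OF b odd] by (simp add: power_mult_distrib)
  have c1: "int p dvd u^p - u" using fermat_little_int[OF p, of u] by (simp add: cong_iff_dvd_diff)
  have "[v^p * (-b)^((p - 1) div 2) = v * L] (mod int p)"
    using fermat_little_int[OF p, of v] L by (rule cong_mult)
  then have c2: "int p dvd v^p * (-b)^((p - 1) div 2) - v * L" by (simp add: cong_iff_dvd_diff)
  have "(of_int u^p + (of_int v * imag_sqrt b)^p) - (of_int u + of_int (v*L) * imag_sqrt b)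
     = of_int (u^p - u) * 1 + of_int (v^p * (-b)^((p - 1) div 2) - v * L) * imag_sqrt b"
    unfolding e by (simp add: algebra_simps)
  also have "\<dots> \<in> Zsqrt_ideal b (int p)"
    by (intro Zsqrt_ideal_add Zsqrt_ideal_dvd c1 c2 Zsqrt_imag_sqrt Zsqrt_of_int[of 1, simplified])
  finally have "(of_int u^p + (of_int v * imag_sqrt b)^p) - (of_int u + of_int (v*L) * imag_sqrt b)
      \<in> Zsqrt_ideal b (int p)" .
  from Zsqrt_ideal_add[OF Zsqrt_pow_prime_additive[OF b p(1), of u v] this] show ?thesis
    by (simp add: algebra_simps)
qed

text \<open>Multiplying \<open>\<mu>\<^sup>p - \<mu>\<close> by \<open>cnj \<mu>\<close> gives \<open>N(\<mu>) (\<mu>\<^sup>p\<^sup>-\<^sup>1 - 1)\<close>, and \<open>N(\<mu>)\<close> cancels modulo p.\<close>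
lemma Zsqrt_pow_pred_in_order:
  fixes p :: nat
  assumes b: "b > 0" and p: "prime p" and cop: "coprime (u^2 + b*v^2) (int p)"
    and F: "(of_int u + of_int v * imag_sqrt b)^p - (of_int u + of_int v * imag_sqrt b)
        \<in> Zsqrt_ideal b (int p)"
  shows "(of_int u + of_int v * imag_sqrt b)^(p - 1) \<in> Zsqrt_order b (int p)"
proof -
  define \<mu> where "\<mu> = (of_int u + of_int v * imag_sqrt b :: complex)"
  have b0: "b \<ge> 0" and \<mu>: "\<mu> \<in> Zsqrt b" using b Zsqrt_memI by (simp_all add: \<mu>_def)
  define \<mu>c where "\<mu>c = (of_int u - of_int v * imag_sqrt b :: complex)"
  have "\<mu>^p = \<mu> * \<mu>^(p-1)" using prime_gt_0_nat[OF p] by (cases p) simp_all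
  then have "(\<mu>^p - \<mu>) * \<mu>c = (\<mu> * \<mu>c) * (\<mu>^(p-1) - 1)" by (simp add: algebra_simps)
  also have "\<dots> = of_int (u^2 + b*v^2) * (\<mu>^(p-1) - 1)"
    unfolding \<mu>_def \<mu>c_def by (simp only: Zsqrt_norm[OF b0])
  finally have eq: "(\<mu>^p - \<mu>) * \<mu>c = of_int (u^2 + b*v^2) * (\<mu>^(p-1) - 1)" .
  have "\<mu>c \<in> Zsqrt b" using Zsqrt_memI[of u "-v" b] by (simp add: \<mu>c_def)
  from Zsqrt_ideal_mult[OF b0 F[folded \<mu>_def] this]
  have "of_int (u^2 + b*v^2) * (\<mu>^(p-1) - 1) \<in> Zsqrt_ideal b (int p)" unfolding eq .
  moreover have "\<mu>^(p-1) - 1 \<in> Zsqrt b" using Zsqrt_diff[OF Zsqrt_power[OF b0 \<mu>] Zsqrt_of_int[of 1]]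
    by simp
  ultimately obtain c d where "\<mu>^(p-1) - 1 = of_int (int p*c) + of_int (int p*d) * imag_sqrt b"
    using Zsqrt_ideal_cancel_coprime[OF b] cop by blast
  then have "\<mu>^(p-1) = of_int (1 + int p * c) + of_int (int p*d) * imag_sqrt b"
    by (simp add: algebra_simps)
  then show ?thesis using Zsqrt_order_memI unfolding \<mu>_def by metis
qed

text \<open>Frobenius modulo p fixes, conjugates or kills the \<open>\<surd>-b\<close>-part according as \<open>L = (-b/p)\<close> is
  \<open>1\<close>, \<open>-1\<close> or \<open>0\<close>; this puts \<open>\<mu>\<^sup>p\<^sup>-\<^sup>L\<close> into \<open>\<int> + p\<int>\<surd>-b\<close>.\<close>
lemma Zsqrt_pow_in_order:
  fixes p :: nat
  assumes b: "b > 0" and p: "prime p" "p > 2" and L: "[(-b)^((p - 1) div 2) = L] (mod int p)"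
    and Lv: "L = 0 \<or> L = 1 \<or> L = -1" and cop: "coprime (u^2 + b*v^2) (int p)"
  shows "(of_int u + of_int v * imag_sqrt b)^(nat (int p - L)) \<in> Zsqrt_order b (int p)"
proof -
  have b0: "b \<ge> 0" using b by simp
  define \<mu> where "\<mu> = (of_int u + of_int v * imag_sqrt b :: complex)"
  define \<mu>c where "\<mu>c = (of_int u - of_int v * imag_sqrt b :: complex)"
  have F: "\<mu>^p - (of_int u + of_int (v*L) * imag_sqrt b) \<in> Zsqrt_ideal b (int p)"
    unfolding \<mu>_def by (rule Zsqrt_frobenius[OF b0 p L])
  from Lv consider "L = 0" | "L = 1" | "L = -1" by blast
  then show ?thesis
  proof cases
    case 1
    then have "\<mu>^p - of_int u \<in> Zsqrt_ideal b (int p)" using F by simp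
    from Zsqrt_order_add_ideal[OF Zsqrt_order_of_int[of u] this] have "\<mu>^p \<in> Zsqrt_order b (int p)"
      by simp
    then show ?thesis using 1 by (simp add: \<mu>_def)
  next
    case 2
    then have "\<mu>^p - \<mu> \<in> Zsqrt_ideal b (int p)" using F by (simp add: \<mu>_def)
    from Zsqrt_pow_pred_in_order[OF b p(1) cop this[unfolded \<mu>_def]]
    show ?thesis using 2 p by (simp add: nat_diff_distrib)
  next
    case 3
    then have "\<mu>^p - \<mu>c \<in> Zsqrt_ideal b (int p)" using F by (simp add: \<mu>c_def)
    then have "(\<mu>^p - \<mu>c) * \<mu> \<in> Zsqrt_ideal b (int p)"
      using Zsqrt_ideal_mult[OF b0] Zsqrt_memI unfolding \<mu>_def by blast
    from Zsqrt_order_add_ideal[OF Zsqrt_order_of_int[of "u^2 + b*v^2"] this]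
    have "of_int (u^2 + b*v^2) + (\<mu>^p - \<mu>c) * \<mu> \<in> Zsqrt_order b (int p)" .
    moreover have "of_int (u^2 + b*v^2) + (\<mu>^p - \<mu>c) * \<mu> = \<mu>^(Suc p)"
      using Zsqrt_norm[OF b0, of u v] unfolding \<mu>_def \<mu>c_def by (simp add: algebra_simps)
    ultimately have "\<mu>^(Suc p) \<in> Zsqrt_order b (int p)" by (simp only:)
    moreover have "nat (int p - L) = Suc p" using 3 by simp
    ultimately show ?thesis unfolding \<mu>_def by simp
  qed
qed

lemma Zsqrt_order_pow_lift:
  fixes p :: nat
  assumes b: "b \<ge> 0" and p: "prime p" and j: "j \<ge> 1" and x: "x \<in> Zsqrt_order b (int p^j)"
  shows "x^p \<in> Zsqrt_order b (int p^(j+1))"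
proof -
  obtain u v where xe: "x = of_int u + of_int (int p^j * v) * imag_sqrt b" using x
    unfolding Zsqrt_order_def by blast
  define a where "a = (of_int u :: complex)"
  define y where "y = of_int v * imag_sqrt b"
  define m where "m = int p ^ j"
  have yO: "y \<in> Zsqrt b" unfolding y_def using Zsqrt_memI[of 0 v b] by simp
  have aO: "a \<in> Zsqrt b" unfolding a_def by (rule Zsqrt_of_int)
  have x2: "x = a + of_int m * y" unfolding xe a_def y_def m_def by (simp add: mult.assoc)
  have "(\<Sum>k<p. of_nat (p choose k) * a^k * (of_int m * y)^(p-k)) \<in> Zsqrt_ideal b (int p^(j+1))"
  proof (rule Zsqrt_ideal_sum)
    fix k assume k: "k \<in> {..<p}"
    have eq: "of_nat (p choose k) * a^k * (of_int m * y)^(p-k)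
        = of_int (int (p choose k) * m^(p-k)) * (a^k * y^(p-k))"
      by (simp add: power_mult_distrib algebra_simps)
    have dv: "int p^(j+1) dvd int (p choose k) * m^(p-k)"
    proof (cases "k = p - 1")
      case True
      then have "p choose k = p" using p binomial_symmetric[of 1 p] prime_gt_0_nat[OF p] by simp
      moreover have "p - k = 1" using True k by auto
      ultimately show ?thesis unfolding m_def by simp
    next
      case False
      then have pk: "p - k \<ge> 2" using k by auto
      have "j*2 \<le> j*(p-k)" using pk by (rule mult_le_mono2)
      then have "j+1 \<le> j*(p-k)" using j by linarith
      then have "int p^(j+1) dvd int p^(j*(p-k))" by (rule le_imp_power_dvd)
      also have "int p^(j*(p-k)) = m^(p-k)" unfolding m_def by (simp add: power_mult)
      finally show ?thesis by simp
    qed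
    have "a^k * y^(p-k) \<in> Zsqrt b" using aO yO b by (intro Zsqrt_mult Zsqrt_power)
    from Zsqrt_ideal_dvd[OF dv this] show "of_nat (p choose k) * a^k * (of_int m * y)^(p-k)
        \<in> Zsqrt_ideal b (int p^(j+1))"
      unfolding eq .
  qed simp
  from Zsqrt_order_add_ideal[OF Zsqrt_order_of_int[of "u^p"] this]
  have "of_int (u^p) + (\<Sum>k<p. of_nat (p choose k) * a^k * (of_int m * y)^(p-k))
      \<in> Zsqrt_order b (int p^(j+1))" .
  moreover have "x^p = of_int (u^p) + (\<Sum>k<p. of_nat (p choose k) * a^k * (of_int m * y)^(p-k))"
    unfolding x2 binomial_split_top by (simp add: a_def)
  ultimately show ?thesis by simp
qed

lemma Zsqrt_order_pow_prime_power:
  fixes p :: nat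
  assumes b: "b \<ge> 0" and p: "prime p" and x: "x \<in> Zsqrt_order b (int p)"
  shows "x^(p^i) \<in> Zsqrt_order b (int p^(i+1))"
proof (induction i)
  case 0 then show ?case using x by simp
next
  case (Suc i)
  have "(x^(p^i))^p \<in> Zsqrt_order b (int p^(i+1+1))" using Zsqrt_order_pow_lift[OF b p _ Suc]
    by simp
  then show ?case by (simp add: power_mult[symmetric] mult.commute)
qed

lemma Legendre_cases: "Legendre x p = 0 \<or> Legendre x p = 1 \<or> Legendre x p = -1"
  unfolding Legendre_def by auto

lemma prime_dvd_odd_ge_3:
  fixes p r :: int
  assumes "prime p" "p dvd r" "odd r" shows "p \<ge> 3"
  using assms prime_ge_2_int[of p] by (cases "p = 2") auto

lemma phiD_pos:
  assumes "r > 0" "odd r" shows "phiD D r > 0"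
  unfolding phiD_def
proof (rule prod_pos)
  fix p assume "p \<in> prime_factors r"
  then have "p \<ge> 3" using assms prime_dvd_odd_ge_3 by (auto simp: in_prime_factors_iff)
  then show "0 < p ^ (multiplicity p r - 1) * (p - Legendre D p)"
    using Legendre_cases[of D p] by auto
qed

lemma euler_criterion_neg4_square:
  fixes p :: nat and a b :: int
  assumes p: "prime p" "p > 2" and nd: "\<not> int p dvd 2*a"
  shows "[(-b)^((p - 1) div 2) = Legendre (-4*(a^2*b)) (int p)] (mod int p)"
proof -
  obtain h where ph: "p = 2*h + 1" using prime_odd_nat p by (metis oddE)
  have e: "-4*(a^2*b) = (2*a)^2 * (-b)" by (simp add: power2_eq_square)
  have "(-4*(a^2*b))^((p - 1) div 2) = ((2*a)^2 * (-b))^((p - 1) div 2)"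
    by (simp only: e)
  also have "\<dots> = ((2*a)^2)^h * (-b)^((p - 1) div 2)"
    using ph by (simp only: power_mult_distrib) simp
  also have "((2*a)^2)^h = (2*a)^(p-1)" using ph by (simp add: power_mult)
  finally have "(-4*(a^2*b))^((p - 1) div 2) = (2*a)^(p-1) * (-b)^((p - 1) div 2)" .
  moreover have "[(2*a)^(p-1) * (-b)^((p - 1) div 2) = 1 * (-b)^((p - 1) div 2)] (mod int p)"
    using fermat_int[OF p nd] by (rule cong_scalar_right)
  ultimately show ?thesis
    using euler_criterion[OF p, of "-4*(a^2*b)"] by (metis cong_sym cong_trans mult_1)
qed

text \<open>For a prime power \<open>Q^k\<close> exactly dividing \<open>r\<close>, the factor \<open>Q^(k-1) (Q - (D/Q))\<close> of
  \<open>\<phi>\<^sub>D(r)\<close> is the exponent produced by Frobenius at \<open>Q\<close> followed by \<open>k - 1\<close> lifting steps.\<close>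
lemma Zsqrt_pow_phiD_in_order_prime_power:
  fixes a b r u v Q :: int
  assumes b: "b > 0" and r: "r > 0" "odd r" and cra: "coprime r a"
    and cop: "coprime (u^2 + b*v^2) r" and Q: "prime Q" "Q dvd r"
  shows "(of_int u + of_int v * imag_sqrt b) ^ nat (phiD (-4*(a^2*b)) r)
    \<in> Zsqrt_order b (Q ^ multiplicity Q r)"
proof -
  define \<mu> where "\<mu> = of_int u + of_int v * imag_sqrt b"
  define k where "k = multiplicity Q r"
  define L where "L = Legendre (-4*(a^2*b)) Q"
  define p where "p = nat Q"
  have "Q \<ge> 3" using prime_dvd_odd_ge_3 Q r by blast
  then have Qp: "Q = int p" and p: "prime p" "p > 2" using Q by (auto simp: p_def)
  have "k \<ge> 1"
    using multiplicity_gt_zero_iff[of r Q] Q r not_prime_unit[of Q] unfolding k_def by auto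
  have "\<not> Q dvd 2" using \<open>Q \<ge> 3\<close> by (auto dest: zdvd_imp_le)
  moreover have "\<not> Q dvd a" using Q cra by (meson coprime_common_divisor not_prime_unit)
  ultimately have "\<not> int p dvd 2*a" using Q Qp by (simp add: prime_dvd_mult_iff)
  then have Lc: "[(-b)^((p - 1) div 2) = L] (mod int p)"
    using euler_criterion_neg4_square[OF p] by (simp add: L_def Qp)
  obtain r' where "r = Q * r'" using Q by blast
  then have "coprime (u^2 + b*v^2) (int p)" using cop Qp by (simp add: coprime_mult_right_iff)
  from Zsqrt_pow_in_order[OF b p Lc Legendre_cases[of "-4*(a^2*b)" Q, folded L_def] this]
  have "\<mu> ^ nat (int p - L) \<in> Zsqrt_order b (int p)" unfolding \<mu>_def .
  from Zsqrt_order_pow_prime_power[OF _ p(1) this, of "k - 1"]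
  have "(\<mu> ^ nat (int p - L)) ^ (p^(k-1)) \<in> Zsqrt_order b (Q ^ k)"
    using b \<open>k \<ge> 1\<close> Qp by simp
  moreover have "Q^(k-1) * (Q - L) dvd phiD (-4*(a^2*b)) r"
    unfolding phiD_def k_def L_def using Q r by (intro dvd_prodI) (auto simp: in_prime_factors_iff)
  then obtain c where c: "phiD (-4*(a^2*b)) r = Q^(k-1) * (Q - L) * c" by blast
  moreover have "Q - L > 0" using Legendre_cases[of "-4*(a^2*b)" Q] \<open>Q \<ge> 3\<close> by (auto simp: L_def)
  moreover have "c > 0"
    using zero_less_mult_pos[of "Q^(k-1) * (Q - L)" c] phiD_pos[OF r, of "-4*(a^2*b)"] c
      \<open>Q - L > 0\<close> \<open>Q \<ge> 3\<close> by simp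
  ultimately have "((\<mu> ^ nat (int p - L)) ^ (p^(k-1))) ^ nat c \<in> Zsqrt_order b (Q ^ k)"
    using Zsqrt_order_power b by simp
  moreover have "nat (phiD (-4*(a^2*b)) r) = nat (int p - L) * p^(k-1) * nat c"
    using c \<open>Q - L > 0\<close> \<open>c > 0\<close> Qp by (simp add: nat_mult_distrib nat_power_eq)
  ultimately show ?thesis by (simp add: \<mu>_def k_def power_mult)
qed

lemma Zsqrt_pow_phiD_coeff_dvd:
  fixes a b r u v z y :: int
  assumes b: "b > 0" and r: "r > 0" "odd r" and cra: "coprime r a"
    and cop: "coprime (u^2 + b*v^2) r"
    and pow: "(of_int u + of_int v * imag_sqrt b) ^ nat (phiD (-4*(a^2*b)) r)
      = of_int z + of_int y * imag_sqrt b"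
  shows "r dvd y"
proof (cases "y = 0")
  case False
  have "multiplicity Q r \<le> multiplicity Q y" if Q: "prime Q" for Q :: int
  proof (cases "Q dvd r")
    case True
    have "Q ^ multiplicity Q r dvd y"
      using Zsqrt_order_coeff_dvd[OF b Zsqrt_pow_phiD_in_order_prime_power[OF b r cra cop Q True]
        pow] .
    then show ?thesis using multiplicity_geI False Q by (metis not_prime_unit)
  qed (simp add: not_dvd_imp_multiplicity_0)
  then show ?thesis using multiplicity_le_imp_dvd[of r y] r by auto
qed simp

section \<open>Powers of a derived class\<close>

lemma zspan_subset_Zsqrt:
  assumes "b \<ge> 0" "\<xi> \<in> Zsqrt b" "\<eta> \<in> Zsqrt b"
  shows "zspan \<xi> \<eta> \<subseteq> Zsqrt b"
  unfolding zspan_def using assms by (auto intro!: Zsqrt_add Zsqrt_mult Zsqrt_of_int)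

lemma lattice_mult_Zsqrt_multiples:
  assumes b: "b \<ge> 0" and S: "S \<subseteq> (\<lambda>w. c1*w) ` Zsqrt b" and T: "T \<subseteq> (\<lambda>w. c2*w) ` Zsqrt b"
  shows "lattice_mult S T \<subseteq> (\<lambda>w. (c1*c2)*w) ` Zsqrt b"
proof
  fix z assume "z \<in> lattice_mult S T"
  then obtain s1 t1 s2 t2 where st: "s1 \<in> S" "t1 \<in> T" "s2 \<in> S" "t2 \<in> T" and z: "z = s1*t1 + s2*t2"
    unfolding lattice_mult_def by blast
  obtain w1 w3 where w13: "w1 \<in> Zsqrt b" "w3 \<in> Zsqrt b" "s1 = c1*w1" "s2 = c1*w3"
    using st S by blast
  obtain w2 w4 where w24: "w2 \<in> Zsqrt b" "w4 \<in> Zsqrt b" "t1 = c2*w2" "t2 = c2*w4"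
    using st T by blast
  have "z = (c1*c2)*(w1*w2 + w3*w4)" unfolding z w13 w24 by (simp add: algebra_simps)
  moreover have "w1*w2 + w3*w4 \<in> Zsqrt b" using w13 w24 b by (intro Zsqrt_add Zsqrt_mult)
  ultimately show "z \<in> (\<lambda>w. (c1*c2)*w) ` Zsqrt b" by blast
qed

text \<open>With \<open>\<mu> = t11 + t21 \<surd>-b\<close>, the lattice of the form is \<open>cnj \<mu>\<close> times the span of \<open>\<mu>\<close> and
  \<open>t12 + t22 \<surd>-b\<close>.\<close>
lemma form_lattice_subst_unit_form:
  assumes b: "b \<ge> 0" and s: "s \<ge> 0" and det: "t11*t22 - t12*t21 = s"
  shows "form_lattice (s^2*b) (subst (1, 0, b) t11 t12 t21 t22)
    \<subseteq> (\<lambda>w. cnj (of_int t11 + of_int t21 * imag_sqrt b) * w) ` Zsqrt b"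
proof -
  obtain A B C where f: "subst (1, 0, b) t11 t12 t21 t22 = (A, B, C)" by (metis prod_cases3)
  define \<mu> where "\<mu> = of_int t11 + of_int t21 * imag_sqrt b"
  define \<eta> where "\<eta> = of_int t12 + of_int t22 * imag_sqrt b"
  have "cnj \<mu> * \<mu> = of_int A" and "cnj \<mu> * \<eta> = of_int (B div 2) + imag_sqrt (s^2*b)"
    using form_lattice_basis_products[of b 0 0 1 b t11 t12 t21 t22 A B C] b s f det
    by (simp_all add: \<mu>_def \<eta>_def imag_sqrt_scale)
  then have "form_lattice (s^2*b) (A, B, C) = (\<lambda>w. cnj \<mu> * w) ` zspan \<mu> \<eta>"
    by (simp add: form_lattice_def zspan_scale[symmetric])
  also have "\<dots> \<subseteq> (\<lambda>w. cnj \<mu> * w) ` Zsqrt b"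
    using zspan_subset_Zsqrt[OF b] Zsqrt_memI unfolding \<mu>_def \<eta>_def by (intro image_mono) blast
  finally show ?thesis using f by (simp add: \<mu>_def)
qed

lemma coprime_add_mult_right: "coprime A (B::int) \<Longrightarrow> coprime A (B + A*m)"
  using gcd_add_mult[of A m B] by (simp add: coprime_iff_gcd_eq_1 add.commute mult.commute)

text \<open>For \<open>k \<ge> 1\<close> the middle coefficient \<open>B' = B\<^sub>k + 2 A\<^sup>k t\<close> must satisfy \<open>B'\<^sup>2 \<equiv> D\<close> modulo
  \<open>4 A\<^sup>k\<^sup>+\<^sup>1\<close>, a condition linear in t since \<open>B\<^sub>k\<close> is invertible modulo A; it is solved by \<open>t = -C\<^sub>k x\<close>
  with \<open>x B\<^sub>k \<equiv> 1 (mod A)\<close>.\<close>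
lemma dirichlet_comp_power_step:
  assumes A: "A > 0" and cop: "coprime A B" and dF: "disc (A, B, C) = D"
    and dk: "disc (A^k, Bk, Ck) = D" and cB: "[Bk = B] (mod 2*A)"
  obtains B' C' where "dirichlet_comp (A, B, C) (A^k, Bk, Ck) (A^Suc k, B', C')"
    and "[B' = B] (mod 2*A)"
proof (cases k)
  case 0
  have "[Bk = B] (mod 2)" by (rule cong_dvd_modulus[OF cB]) simp
  then have "[B = Bk] (mod 2*1)" by (simp add: cong_sym_eq)
  then have "dirichlet_comp (A, B, C) (A^k, Bk, Ck) (A^Suc k, B, C)"
    using 0 A dF dk by (simp add: dirichlet_comp_def disc_def)
  then show ?thesis using that cong_refl by blast
next
  case (Suc j)
  obtain k' where "B = Bk + 2*A*k'" using cB unfolding cong_iff_lin by blast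
  then obtain m where m: "Bk = B + 2*A*m"
    by (metis add_diff_cancel_right' diff_conv_add_uminus mult_minus_right)
  have "coprime A Bk"
    using coprime_add_mult_right[OF cop, of "2*m"] by (simp add: m mult.commute mult.left_commute)
  then have "coprime Bk A" by (simp add: coprime_commute)
  then obtain x y where xy: "x*Bk + y*A = 1" using bezout_int[of Bk A]
    by (auto simp: coprime_iff_gcd_eq_1)
  define t where "t = - Ck*x"
  define B' where "B' = Bk + 2*A^k*t"
  define C' where "C' = Ck*y + A^j*t^2"
  have "B'^2 - 4*A^Suc k*C' - (Bk^2 - 4*A^k*Ck)
      = 4*A^k*Bk*(t + Ck*x) + 4*A^k*Ck*((1 - x*Bk) - A*y) + 4*A^k*t^2*(A^k - A*A^j)"
    unfolding B'_def C'_def by (simp add: algebra_simps power2_eq_square)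
  also have "\<dots> = 0" using xy Suc unfolding t_def by (simp add: algebra_simps)
  finally have dF': "B'^2 - 4*A^Suc k*C' = D" using dk by (simp add: disc_def)
  have "(B + Bk) div 2 = B + A*m" using m by simp
  then have "coprime A ((B + Bk) div 2)" using coprime_add_mult_right[OF cop] by simp
  then have "gcd A (gcd (A^k) ((B + Bk) div 2)) = 1"
    by (metis coprime_iff_gcd_eq_1 gcd.left_commute gcd_1_int)
  moreover have "B' - B = 2*A*(m + A^j*t)" unfolding B'_def m Suc by (simp add: algebra_simps)
  then have "[B' = B] (mod 2*A)" unfolding cong_iff_dvd_diff by simp
  moreover have "[B' = Bk] (mod 2*A^k)" unfolding B'_def cong_iff_dvd_diff by simp
  ultimately have "dirichlet_comp (A, B, C) (A^k, Bk, Ck) (A^Suc k, B', C')"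
    using A dF dk dF' by (simp add: dirichlet_comp_def disc_def cong_sym)
  then show ?thesis using that \<open>[B' = B] (mod 2*A)\<close> by blast
qed

lemma one_class_representative:
  assumes "disc (A, B, C) = -4*n"
  shows "one_class (-4*n) = qclass (1, B, A*C)" and "disc (1, B, A*C) = -4*n"
proof -
  obtain B0 where B: "B = 2*B0" and B0: "B0^2 + n = A*C" using disc_neg4_middle_even assms by blast
  have "(1, B, A*C) = subst (1, 0, n) 1 B0 0 1" by (simp add: subst_def B B0[symmetric])
  then have "(1, B, A*C) \<in> qclass (1, 0, n)" using subst_in_qclass[of 1 1 B0 0 "(1, 0, n)"] by simp
  then show "one_class (-4*n) = qclass (1, B, A*C)"
    using qclass_eq by (simp add: one_class_def principal_form_def)
  show "disc (1, B, A*C) = -4*n" using assms by (simp add: disc_def)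
qed

lemma form_lattice_comp_in_multiple:
  assumes "b \<ge> 0" "n \<ge> 0" "dirichlet_comp f g F" "disc f = -4*n"
    and "form_lattice n f \<subseteq> (\<lambda>w. c1*w) ` Zsqrt b" "form_lattice n g \<subseteq> (\<lambda>w. c2*w) ` Zsqrt b"
  shows "form_lattice n F \<subseteq> (\<lambda>w. (c1*c2)*w) ` Zsqrt b"
  using form_lattice_dirichlet_comp[OF assms(2-4)] lattice_mult_Zsqrt_multiples[OF assms(1,5,6)]
    by simp

lemma cpow_form_lattice_in_multiple:
  fixes A B C b s :: int
  assumes b: "b > 0" and s: "s > 0" and f: "(A, B, C) = subst (1, 0, b) t11 t12 t21 t22"
    and det: "t11*t22 - t12*t21 = s" and A: "A > 0" and cop: "coprime A B"
    and h: "h = qclass (A, B, C)"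
  defines "\<mu> \<equiv> of_int t11 + of_int t21 * imag_sqrt b"
  shows "\<exists>Bk Ck. cpow (-4*(s^2*b)) h k = qclass (A^k, Bk, Ck) \<and> disc (A^k, Bk, Ck) = -4*(s^2*b)
     \<and> [Bk = B] (mod 2*A) \<and> form_lattice (s^2*b) (A^k, Bk, Ck) \<subseteq> (\<lambda>w. cnj \<mu> ^ k * w) ` Zsqrt b"
proof (induction k)
  case 0
  have dF: "disc (A, B, C) = -4*(s^2*b)"
    using disc_subst[of "(1, 0, b)" t11 t12 t21 t22] f det by (simp add: disc_def)
  obtain B0 where B: "B = 2*B0" using disc_neg4_middle_even dF by blast
  have "of_int B0 + imag_sqrt (s^2*b) \<in> Zsqrt b"
    using s b Zsqrt_memI[of B0 s b] by (simp add: imag_sqrt_scale)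
  then have "form_lattice (s^2*b) (1, B, A*C) \<subseteq> Zsqrt b"
    using zspan_subset_Zsqrt[of b 1] b Zsqrt_of_int[of 1] by (simp add: form_lattice_def B)
  then show ?case using one_class_representative[OF dF] by (intro exI[of _ B] exI[of _ "A*C"]) simp
next
  case (Suc k)
  then obtain Bk Ck where cp: "cpow (-4*(s^2*b)) h k = qclass (A^k, Bk, Ck)"
    and dk: "disc (A^k, Bk, Ck) = -4*(s^2*b)" and cB: "[Bk = B] (mod 2*A)"
    and Lk: "form_lattice (s^2*b) (A^k, Bk, Ck) \<subseteq> (\<lambda>w. cnj \<mu> ^ k * w) ` Zsqrt b"
    by blast
  have dF: "disc (A, B, C) = -4*(s^2*b)"
    using disc_subst[of "(1, 0, b)" t11 t12 t21 t22] f det by (simp add: disc_def)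
  obtain B' C' where dc: "dirichlet_comp (A, B, C) (A^k, Bk, Ck) (A^Suc k, B', C')"
    and cB': "[B' = B] (mod 2*A)"
    using dirichlet_comp_power_step[OF A cop dF dk cB] by blast
  have "cpow (-4*(s^2*b)) h (Suc k) = qclass (A^Suc k, B', C')"
    using cmul_qclass[OF _ dF dc] cp h b s by simp
  moreover have "disc (A^Suc k, B', C') = -4*(s^2*b)"
    using dirichlet_comp_disc_pos(2)[OF dc] dF by simp
  moreover have "form_lattice (s^2*b) (A, B, C) \<subseteq> (\<lambda>w. cnj \<mu> * w) ` Zsqrt b"
    using form_lattice_subst_unit_form[OF _ _ det] f b s by (simp add: \<mu>_def)
  then have "form_lattice (s^2*b) (A^Suc k, B', C') \<subseteq> (\<lambda>w. cnj \<mu> ^ Suc k * w) ` Zsqrt b"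
    using form_lattice_comp_in_multiple[OF _ _ dc dF _ Lk] b s by simp
  ultimately show ?case using cB' by blast
qed

text \<open>The second basis vector \<open>B'/2 + s \<surd>-b\<close> of the lattice is \<open>(z - y \<surd>-b) (p + q \<surd>-b)\<close>, and
  comparing coefficients shows that \<open>(z, p; y, q)\<close> transforms (1, 0, b) into the form.\<close>
lemma subst_unit_form_of_form_lattice:
  fixes b s z y A' B' C' :: int
  assumes b: "b > 0" and s: "s > 0" and d: "disc (A', B', C') = -4*(s^2*b)"
    and A': "A' = z^2 + b*y^2" "A' > 0"
    and L: "form_lattice (s^2*b) (A', B', C')
        \<subseteq> (\<lambda>w. (of_int z - of_int y * imag_sqrt b) * w) ` Zsqrt b"
  shows "\<exists>p q. (A', B', C') = subst (1, 0, b) z p y q \<and> z*q - p*y = s"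
proof -
  obtain E where E: "B' = 2*E" using disc_neg4_middle_even d by blast
  have "of_int E + imag_sqrt (s^2*b) \<in> form_lattice (s^2*b) (A', B', C')"
    unfolding form_lattice_def E using zspan_mem_right by simp
  then obtain w where w: "w \<in> Zsqrt b"
    "of_int E + of_int s * imag_sqrt b = (of_int z - of_int y * imag_sqrt b) * w"
    using L s b by (auto simp: imag_sqrt_scale)
  obtain p q where pq: "w = of_int p + of_int q * imag_sqrt b" using w(1) unfolding Zsqrt_def
    by blast
  have "(of_int z - of_int y * imag_sqrt b) * w
      = of_int z * of_int p - of_int y * of_int q * imag_sqrt b ^ 2
        + (of_int z * of_int q - of_int y * of_int p) * imag_sqrt b"
    unfolding pq by (simp add: algebra_simps power2_eq_square)
  also have "\<dots> = of_int (z*p + b*y*q) + of_int (z*q - y*p) * imag_sqrt b"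
    using imag_sqrt_squared[of b] b by simp
  finally have "(of_int z - of_int y * imag_sqrt b) * w
      = of_int (z*p + b*y*q) + of_int (z*q - y*p) * imag_sqrt b" .
  then have Ee: "E = z*p + b*y*q" and se: "s = z*q - y*p"
    using w(2) Zsqrt_coords_unique[OF b] by metis+
  have "(2*E)^2 - 4*A'*C' = -4*(s^2*b)" using d E by (simp add: disc_def)
  moreover have "(2*(z*p + b*y*q))^2 - 4*(z^2 + b*y^2)*(p^2 + b*q^2) = -4*((z*q - y*p)^2*b)"
    by (simp add: algebra_simps power2_eq_square)
  ultimately have "A' * C' = A' * (p^2 + b*q^2)" using Ee se A' by (simp add: algebra_simps)
  then have "C' = p^2 + b*q^2" using A' by simp
  then have "(A', B', C') = subst (1, 0, b) z p y q"
    using A' E Ee by (simp add: subst_unit_form algebra_simps)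
  then show ?thesis using se by (auto simp: mult.commute)
qed

lemma subst_unit_form_descend:
  fixes b r a z p y q :: int
  assumes f: "f = subst (1, 0, b) z p y q" and det: "z*q - p*y = a*r" and r: "r \<noteq> 0"
    and y: "r dvd y" and cop: "coprime (z^2 + b*y^2) r"
  shows "derived_from (qclass f) (qclass (1, 0, b*r^2)) a"
proof -
  obtain y' where y': "y = r*y'" using y by blast
  have "coprime z r"
  proof (rule coprime_by_primes)
    fix P assume P: "prime P" "P dvd z" "P dvd r"
    then have "P dvd z^2 + b*y^2" using y' by (simp add: power2_eq_square)
    then show False using cop P by (meson coprime_common_divisor not_prime_unit)
  qed
  have "z*q = r*(a + y'*p)" using det y' by (simp add: algebra_simps)
  then have "r dvd q" using \<open>coprime z r\<close>
    by (metis coprime_commute coprime_dvd_mult_right_iff dvd_triv_left)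
  then obtain q' where q': "q = r*q'" by blast
  have "r * (z*q' - p*y') = r * a" using det y' q' by (simp add: algebra_simps)
  then have "z*q' - p*y' = a" using r by simp
  moreover have "f = subst (1, 0, b*r^2) z p y' q'"
    using f y' q' by (simp add: subst_unit_form algebra_simps power2_eq_square)
  ultimately show ?thesis using derived_from_qclass_subst by metis
qed

lemma cpow_subst_unit_form:
  fixes A B C b s :: int
  assumes b: "b > 0" and s: "s > 0" and f: "(A, B, C) = subst (1, 0, b) t11 t12 t21 t22"
    and det: "t11*t22 - t12*t21 = s" and A: "A > 0" and cop: "coprime A B"
    and h: "h = qclass (A, B, C)"
  obtains z y p q
  where "(of_int t11 + of_int t21 * imag_sqrt b)^k = of_int z + of_int y * imag_sqrt b"
    and "A^k = z^2 + b*y^2" and "cpow (-4*(s^2*b)) h k = qclass (subst (1, 0, b) z p y q)"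
    and "z*q - p*y = s"
proof -
  define \<mu> where "\<mu> = of_int t11 + of_int t21 * imag_sqrt b"
  from cpow_form_lattice_in_multiple[OF b s f det A cop h]
  obtain Bk Ck where cp: "cpow (-4*(s^2*b)) h k = qclass (A^k, Bk, Ck)"
    and dk: "disc (A^k, Bk, Ck) = -4*(s^2*b)"
    and Lk: "form_lattice (s^2*b) (A^k, Bk, Ck) \<subseteq> (\<lambda>w. cnj \<mu> ^ k * w) ` Zsqrt b"
    unfolding \<mu>_def by blast
  have "\<mu>^k \<in> Zsqrt b" unfolding \<mu>_def using b by (intro Zsqrt_power Zsqrt_memI) simp
  then obtain z y where zy: "\<mu>^k = of_int z + of_int y * imag_sqrt b" unfolding Zsqrt_def by blast
  have cnjk: "cnj \<mu> ^ k = of_int z - of_int y * imag_sqrt b"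
    using arg_cong[OF zy, of cnj] by simp
  have "A = t11^2 + b*t21^2" using f by (simp add: subst_unit_form)
  then have "\<mu> * cnj \<mu> = of_int A" unfolding \<mu>_def using Zsqrt_norm[of b t11 t21] b by simp
  then have "of_int (A^k) = \<mu>^k * cnj \<mu> ^ k" by (simp flip: power_mult_distrib)
  also have "\<dots> = of_int (z^2 + b*y^2)" unfolding zy cnjk using Zsqrt_norm[of b z y] b by simp
  finally have Ak: "A^k = z^2 + b*y^2" by (simp only: of_int_eq_iff)
  moreover have "A^k > 0" using A by simp
  ultimately obtain p q where "(A^k, Bk, Ck) = subst (1, 0, b) z p y q" and "z*q - p*y = s"
    using subst_unit_form_of_form_lattice[OF b s dk _ _ Lk[unfolded cnjk]] by blast
  then show ?thesis using that zy Ak cp unfolding \<mu>_def by metis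
qed

lemma derived_class_unit_form_rep:
  assumes der: "derived_from h (qclass (1, 0, b)) s" and h: "h \<in> classgroup (-4*(s^2*b))"
    and b: "b > 0" and s: "s > 0"
  obtains A B C t11 t12 t21 t22 where "(A, B, C) = subst (1, 0, b) t11 t12 t21 t22"
    and "t11*t22 - t12*t21 = s" and "h = qclass (A, B, C)"
    and "A > 0" and "coprime A B" and "coprime A (4*(s^2*b))"
proof -
  obtain h1 where "h = qclass h1" "primitive h1" using h unfolding classgroup_def by auto
  moreover have "4*(s^2*b) \<noteq> 0" using s b by simp
  ultimately obtain t11 t12 t21 t22 where det: "t11*t22 - t12*t21 = s"
    and h: "h = qclass (subst (1, 0, b) t11 t12 t21 t22)"
    and cop: "coprime (fst (subst (1, 0, b) t11 t12 t21 t22)) (4*(s^2*b))"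
    using derived_class_rep_coprime[OF der] by metis
  obtain A B C where f: "(A, B, C) = subst (1, 0, b) t11 t12 t21 t22" by (metis prod_cases3)
  have dF: "disc (A, B, C) = -4*(s^2*b)"
    using disc_subst[of "(1, 0, b)" t11 t12 t21 t22] f det by (simp add: disc_def)
  have copA: "coprime A (4*(s^2*b))" using cop f by (metis fst_conv)
  have "A \<ge> 0" using f b by (simp add: subst_unit_form)
  moreover have "s^2*b > 0" using s b by simp
  ultimately have "A > 0" "coprime A B" using first_coeff_coprime_disc[OF copA dF] by blast+
  moreover have "h = qclass (A, B, C)" using h f by simp
  ultimately show ?thesis using that[OF f det] copA by blast
qed

theorem lemma3p6:
  fixes a b r :: int and g h :: "qform set"
  assumes "a > 0" and "b > 1" and "squarefree b"
    and "g \<in> classgroup (-4 * (a^2 * b))"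
    and "derived_from g (qclass (1, 0, b)) a"
    and "r > 0" and "odd r" and "coprime r a"
    and "h \<in> classgroup (-4 * (a^2 * b) * r^2)"
    and "derived_from h g r"
  shows "derived_from (cpow (-4 * (a^2 * b) * r^2) h (nat (phiD (-4 * (a^2 * b)) r)))
           (qclass (1, 0, b)) (a * r)
       \<and> derived_from (cpow (-4 * (a^2 * b) * r^2) h (nat (phiD (-4 * (a^2 * b)) r)))
           (qclass (1, 0, b * r^2)) a"
proof -
  define s where "s = a*r"
  define N where "N = nat (phiD (-4 * (a^2 * b)) r)"
  have b: "b > 0" and s: "s > 0" using assms(1,2,6) by (simp_all add: s_def)
  have D: "-4 * (a^2 * b) * r^2 = -4*(s^2*b)" by (simp add: s_def power_mult_distrib)
  obtain g1 where "g = qclass g1" using assms(4) unfolding classgroup_def by blast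
  then have "derived_from h (qclass (1, 0, b)) s"
    using derived_from_trans[OF assms(10,5)] by (simp add: s_def)
  moreover have "h \<in> classgroup (-4*(s^2*b))" using assms(9) unfolding D .
  ultimately obtain A B C t11 t12 t21 t22 where f: "(A, B, C) = subst (1, 0, b) t11 t12 t21 t22"
    and det: "t11*t22 - t12*t21 = s" and h: "h = qclass (A, B, C)"
    and A: "A > 0" "coprime A B" and copA: "coprime A (4*(s^2*b))"
    by (rule derived_class_unit_form_rep[OF _ _ b s])
  have "r dvd 4*(s^2*b)" by (simp add: s_def power2_eq_square)
  then have "coprime A r" using coprime_divisors[OF dvd_refl _ copA] by blast
  obtain z y p q
    where zy: "(of_int t11 + of_int t21 * imag_sqrt b) ^ N = of_int z + of_int y * imag_sqrt b"
      and AN: "A ^ N = z^2 + b*y^2" and cp: "cpow (-4*(s^2*b)) h N = qclass (subst (1, 0, b) z p y q)"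
      and detN: "z*q - p*y = s"
    by (rule cpow_subst_unit_form[OF b s f det A h])
  have "A = t11^2 + b*t21^2" using f by (simp add: subst_unit_form)
  then have "r dvd y"
    using Zsqrt_pow_phiD_coeff_dvd[OF b assms(6,7,8) _ zy[unfolded N_def]] \<open>coprime A r\<close> by simp
  moreover have "coprime (z^2 + b*y^2) r" using \<open>coprime A r\<close> AN[symmetric] by simp
  ultimately have "derived_from (qclass (subst (1, 0, b) z p y q)) (qclass (1, 0, b*r^2)) a"
    using subst_unit_form_descend[OF refl detN[unfolded s_def]] assms(6) by simp
  moreover have "derived_from (qclass (subst (1, 0, b) z p y q)) (qclass (1, 0, b)) (a * r)"
    using derived_from_qclass_subst[OF detN[unfolded s_def]] .
  ultimately show ?thesis using cp D unfolding N_def by (simp only:)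
qed

end
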